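(* For every $n\ge1$, the number of permutations in $\mathcal S_n$ avoiding $(321,\{1\},\{1\})$ equals the number of upper triangular binary matrices with exactly $n+1$ entries equal to $1$ and with no zero rows or columns, and it also equals the number of permutations in $\mathcal S_{n+1}$ avoiding both $(231,\{1\},\{1\})$ and $(21,\{1\},\{1\})$.
   Context: For $n\ge1$, $\mathcal S_n$ is the set of permutations $\pi=\pi_1\cdots\pi_n$ of $[n]$. A bi-vincular pattern of length $k$ is a triple $p=(\sigma,X,Y)$ with $\sigma\in\mathcal S_k$ and $X,Y\subseteq\{0,1,\dots,k\}$. A permutation $\pi\in\mathcal S_n$ contains $p$ if there are indices $1\le i_1<\dots<i_k\le n$ such that $(\pi_{i_1},\dots,\pi_{i_k})$ is order-isomorphic to $\sigma$ and, letting $j_1<\dots<j_k$ be the values $\pi_{i_1},\dots,\pi_{i_k}$ sorted increasingly and setting $i_0=j_0=0$, $i_{k+1}=j_{k+1}=n+1$, one has $i_{x+1}=i_x+1$ for all $x\in X$ and $j_{y+1}=j_y+1$ for all $y\in Y$. Otherwise $\pi$ avoids $p$. An upper triangular binary matrix is a square matrix (of any size) with entries in $\{0,1\}$ whose entries below the main diagonal are all $0$; matrices of all sizes are counted. *)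

theory Defs
  imports "HOL-Combinatorics.Permutations"
begin

text \<open>Permutations of [n] are functions nat => nat that permute {1..n}
(and fix everything else). A pattern permutation of length k is given by
the list of its values.\<close>

definition perm_of_list :: "nat list \<Rightarrow> nat \<Rightarrow> nat" where
  "perm_of_list l = (\<lambda>i. if 1 \<le> i \<and> i \<le> length l then l ! (i - 1) else i)"

definition ext_seq :: "nat \<Rightarrow> nat \<Rightarrow> (nat \<Rightarrow> nat) \<Rightarrow> nat \<Rightarrow> nat" where
  "ext_seq n k f t = (if t = 0 then 0 else if t = k + 1 then n + 1 else f t)"

text \<open>pi in S_n contains the bi-vincular pattern (sigma, X, Y) of length k.
 iota gives the positions i_1 < ... < i_k, j gives the occurring values sorted increasingly.\<close>
definition contains_bv ::
  "nat \<Rightarrow> (nat \<Rightarrow> nat) \<Rightarrow> nat \<Rightarrow> (nat \<Rightarrow> nat) \<Rightarrow> nat set \<Rightarrow> nat set \<Rightarrow> bool" where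
  "contains_bv n \<pi> k \<sigma> X Y \<longleftrightarrow>
     (\<exists>\<iota> j. strict_mono_on {1..k} \<iota> \<and> \<iota> ` {1..k} \<subseteq> {1..n}
        \<and> (\<forall>a\<in>{1..k}. \<forall>b\<in>{1..k}. \<pi> (\<iota> a) < \<pi> (\<iota> b) \<longleftrightarrow> \<sigma> a < \<sigma> b)
        \<and> strict_mono_on {1..k} j \<and> j ` {1..k} = (\<lambda>a. \<pi> (\<iota> a)) ` {1..k}
        \<and> (\<forall>x\<in>X. ext_seq n k \<iota> (x + 1) = ext_seq n k \<iota> x + 1)
        \<and> (\<forall>y\<in>Y. ext_seq n k j (y + 1) = ext_seq n k j y + 1))"

definition avoids_bv ::
  "nat \<Rightarrow> (nat \<Rightarrow> nat) \<Rightarrow> nat list \<Rightarrow> nat set \<Rightarrow> nat set \<Rightarrow> bool" where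
  "avoids_bv n \<pi> s X Y \<longleftrightarrow> \<not> contains_bv n \<pi> (length s) (perm_of_list s) X Y"

text \<open>Upper triangular binary matrices of size m (any m), represented as (m, A) with
 A i j the entry in row i, column j (1 <= i, j <= m), A zero outside the m x m range.\<close>
definition upper_tri_bin :: "nat \<Rightarrow> (nat \<Rightarrow> nat \<Rightarrow> nat) \<Rightarrow> bool" where
  "upper_tri_bin m A \<longleftrightarrow>
     (\<forall>i j. A i j \<in> {0, 1})
     \<and> (\<forall>i j. \<not> (1 \<le> i \<and> i \<le> m \<and> 1 \<le> j \<and> j \<le> m) \<longrightarrow> A i j = 0)
     \<and> (\<forall>i j. j < i \<longrightarrow> A i j = 0)"

definition ones :: "(nat \<Rightarrow> nat \<Rightarrow> nat) \<Rightarrow> (nat \<times> nat) set" where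
  "ones A = {(i, j). A i j = 1}"

definition no_zero_lines :: "nat \<Rightarrow> (nat \<Rightarrow> nat \<Rightarrow> nat) \<Rightarrow> bool" where
  "no_zero_lines m A \<longleftrightarrow>
     (\<forall>i\<in>{1..m}. \<exists>j\<in>{1..m}. A i j = 1) \<and> (\<forall>j\<in>{1..m}. \<exists>i\<in>{1..m}. A i j = 1)"

end

theory Submission
  imports Defs
begin

text \<open>All three families are the levels of generating trees with root label (2, 1) and the
  succession rule counted by \<open>tree_count\<close>, so level n of each has \<open>tree_count (n - 1) (2, 1)\<close>
  elements. Permutations avoiding (321, {1}, {1}) grow by appending a last value that is not the
  bottom of a descent; k counts these values and p is the rank of the current last value among
  them. Permutations avoiding (231, {1}, {1}) and (21, {1}, {1}) grow by inserting a new maximum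
  into a gap where it creates neither pattern; p is the rank of the gap in front of the current
  maximum. Matrices grow as described at \<open>matrix_child\<close>; k is the size and \<open>p + 1\<close> is the row of
  the topmost one in the last column.\<close>

section \<open>Generating trees\<close>

text \<open>\<open>tree_count m (k, p)\<close> is the number of nodes m levels below a node labelled (k, p) in a
  generating tree with succession rule
  \<open>(k, p) \<leadsto> (k, 0), \<dots>, (k, p - 1), (k + 1, p + 1), \<dots>, (k + 1, k)\<close>.\<close>
fun tree_count :: "nat \<Rightarrow> nat \<times> nat \<Rightarrow> nat" where
  "tree_count 0 _ = 1"
| "tree_count (Suc m) (k, p) =
     (\<Sum>q\<in>{1..p}. tree_count m (k, q - 1)) + (\<Sum>q\<in>{p<..k}. tree_count m (Suc k, q))"

lemma card_level_generating_tree: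
  fixes level :: "nat \<Rightarrow> 'a set" and children :: "'a \<Rightarrow> 'a set"
    and parent :: "'a \<Rightarrow> 'a" and label :: "'a \<Rightarrow> nat \<times> nat"
  assumes level_Suc: "\<And>n. n \<ge> 1 \<Longrightarrow> level (Suc n) = (\<Union>x\<in>level n. children x)"
    and parent_child: "\<And>n x c. n \<ge> 1 \<Longrightarrow> x \<in> level n \<Longrightarrow> c \<in> children x \<Longrightarrow> parent c = x"
    and finite_children: "\<And>n x. n \<ge> 1 \<Longrightarrow> x \<in> level n \<Longrightarrow> finite (children x)"
    and sum_children: "\<And>n x m. n \<ge> 1 \<Longrightarrow> x \<in> level n \<Longrightarrow>
        (\<Sum>c\<in>children x. tree_count m (label c)) = tree_count (Suc m) (label x)"
    and level_1: "level 1 = {root}" and label_root: "label root = (2, 1)"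
  shows "card (level (Suc j)) = tree_count j (2, 1)"
proof -
  have finite_level: "finite (level (Suc i))" for i
  proof (induction i)
    case (Suc i)
    then show ?case using level_Suc[of "Suc i"] finite_children[of "Suc i"] by auto
  qed (use level_1 in simp)
  have disjoint: "children x \<inter> children y = {}"
    if "x \<in> level (Suc i)" "y \<in> level (Suc i)" "x \<noteq> y" for i x y
    using that parent_child[of "Suc i" x] parent_child[of "Suc i" y] by auto
  define F where "F i m = (\<Sum>x\<in>level (Suc i). tree_count m (label x))" for i m
  have F_Suc: "F (Suc i) m = F i (Suc m)" for i m
  proof -
    have "F (Suc i) m = (\<Sum>x\<in>(\<Union>x\<in>level (Suc i). children x). tree_count m (label x))"
      unfolding F_def using level_Suc[of "Suc i"] by simp
    also have "\<dots> = (\<Sum>x\<in>level (Suc i). \<Sum>c\<in>children x. tree_count m (label c))"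
      by (rule sum.UNION_disjoint) (use finite_level finite_children[of "Suc i"] disjoint in auto)
    also have "\<dots> = F i (Suc m)"
      unfolding F_def using sum_children[of "Suc i"] by simp
    finally show ?thesis .
  qed
  have "F i m = F 0 (i + m)" for i m
    by (induction i arbitrary: m) (auto simp: F_Suc)
  from this[of j 0] show ?thesis
    unfolding F_def using level_1 label_root by simp
qed

lemma sum_if_le_split:
  assumes "p \<le> (k::nat)"
  shows "(\<Sum>q\<in>{1..k}. if q \<le> p then f q else g q) = (\<Sum>q\<in>{1..p}. f q) + (\<Sum>q\<in>{p<..k}. g q)"
proof -
  have "{1..k} = {1..p} \<union> {p<..k}" using assms by auto
  then have "(\<Sum>q\<in>{1..k}. if q \<le> p then f q else g q) =
     (\<Sum>q\<in>{1..p}. if q \<le> p then f q else g q) + (\<Sum>q\<in>{p<..k}. if q \<le> p then f q else g q)"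
    by (simp add: sum.union_disjoint ivl_disj_int)
  also have "\<dots> = (\<Sum>q\<in>{1..p}. f q) + (\<Sum>q\<in>{p<..k}. g q)"
    by (intro arg_cong2[where f = "(+)"] sum.cong) auto
  finally show ?thesis .
qed

lemma sum_tree_count_ranked_children:
  assumes rank: "bij_betw r A {1..k}" and "p \<le> k" and "inj_on child A"
    and label: "\<And>v. v \<in> A \<Longrightarrow>
      label (child v) = (if r v \<le> p then (k, r v - 1) else (Suc k, r v))"
  shows "(\<Sum>c\<in>child ` A. tree_count m (label c)) = tree_count (Suc m) (k, p)"
proof -
  let ?f = "\<lambda>q. if q \<le> p then tree_count m (k, q - 1) else tree_count m (Suc k, q)"
  have "(\<Sum>c\<in>child ` A. tree_count m (label c)) = (\<Sum>v\<in>A. ?f (r v))"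
    using assms(3) by (simp add: sum.reindex label if_distrib cong: sum.cong)
  also have "\<dots> = (\<Sum>q\<in>{1..k}. ?f q)"
    using sum.reindex_bij_betw[OF rank, of ?f] .
  also have "\<dots> = tree_count (Suc m) (k, p)"
    using sum_if_le_split[OF assms(2), of "\<lambda>q. tree_count m (k, q - 1)"] by simp
  finally show ?thesis .
qed

definition rank_in :: "nat set \<Rightarrow> nat \<Rightarrow> nat" where
  "rank_in A v = card {w\<in>A. w \<le> v}"

lemma rank_in_le_iff:
  assumes "finite A" "v \<in> A"
  shows "rank_in A v \<le> rank_in A u \<longleftrightarrow> v \<le> u"
proof
  assume "v \<le> u"
  then show "rank_in A v \<le> rank_in A u"
    unfolding rank_in_def using assms by (intro card_mono) auto
next
  assume "rank_in A v \<le> rank_in A u"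
  moreover have "u < v \<Longrightarrow> {w\<in>A. w \<le> u} \<subset> {w\<in>A. w \<le> v}"
    using assms by (auto simp: set_eq_iff dest!: spec[of _ v])
  then have "u < v \<Longrightarrow> rank_in A u < rank_in A v"
    unfolding rank_in_def using assms by (intro psubset_card_mono) auto
  ultimately show "v \<le> u" by linarith
qed

lemma rank_in_le_card: "finite A \<Longrightarrow> rank_in A v \<le> card A"
  unfolding rank_in_def by (intro card_mono) auto

lemma bij_betw_rank_in:
  assumes "finite A"
  shows "bij_betw (rank_in A) A {1..card A}"
proof -
  have inj: "inj_on (rank_in A) A"
    by (rule inj_onI) (metis assms le_antisym rank_in_le_iff order_refl)
  have "rank_in A v \<ge> 1" if "v \<in> A" for v
  proof -
    have "card {v} \<le> card {w\<in>A. w \<le> v}"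
      using that assms by (intro card_mono) auto
    then show ?thesis unfolding rank_in_def by simp
  qed
  then have "rank_in A ` A \<subseteq> {1..card A}" using rank_in_le_card assms by auto
  moreover have "card (rank_in A ` A) = card {1..card A}" using card_image[OF inj] by simp
  ultimately have "rank_in A ` A = {1..card A}" by (simp add: card_subset_eq)
  then show ?thesis using inj by (simp add: bij_betw_def)
qed

lemma permutes_in_atLeastAtMost:
  assumes "(\<sigma> :: nat \<Rightarrow> nat) permutes {1..N}" "1 \<le> t" "t \<le> N"
  shows "1 \<le> \<sigma> t \<and> \<sigma> t \<le> N"
  using permutes_in_image[OF assms(1), of t] assms(2,3) by auto

lemma permutes_outside_atLeastAtMost:
  assumes "(\<sigma> :: nat \<Rightarrow> nat) permutes {1..N}" "t = 0 \<or> N < t"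
  shows "\<sigma> t = t"
  using permutes_not_in[OF assms(1)] assms(2) by auto

lemma permutes_eq_iff: "(\<sigma> :: nat \<Rightarrow> nat) permutes {1..N} \<Longrightarrow> \<sigma> x = \<sigma> y \<longleftrightarrow> x = y"
  using permutes_inj[of \<sigma> "{1..N}"] by (auto simp: inj_eq)

lemma permutes_atLeastAtMost_surj:
  assumes "(\<sigma> :: nat \<Rightarrow> nat) permutes {1..N}" "1 \<le> v" "v \<le> N"
  shows "\<exists>t. 1 \<le> t \<and> t \<le> N \<and> \<sigma> t = v"
  using permutes_image[OF assms(1)] assms(2,3) by (metis atLeastAtMost_iff imageE)

section \<open>Bivincular patterns of length two and three\<close>

definition avoids_321 :: "nat \<Rightarrow> (nat \<Rightarrow> nat) \<Rightarrow> bool" where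
  "avoids_321 n \<pi> \<longleftrightarrow>
     \<not> (\<exists>i c. 1 \<le> i \<and> Suc i < c \<and> c \<le> n \<and> \<pi> (Suc i) < \<pi> i \<and> \<pi> (Suc i) = Suc (\<pi> c))"

definition avoids_231 :: "nat \<Rightarrow> (nat \<Rightarrow> nat) \<Rightarrow> bool" where
  "avoids_231 n \<pi> \<longleftrightarrow>
     \<not> (\<exists>i c. 1 \<le> i \<and> Suc i < c \<and> c \<le> n \<and> \<pi> i < \<pi> (Suc i) \<and> \<pi> i = Suc (\<pi> c))"

definition avoids_21 :: "nat \<Rightarrow> (nat \<Rightarrow> nat) \<Rightarrow> bool" where
  "avoids_21 n \<pi> \<longleftrightarrow> \<not> (\<exists>i. 1 \<le> i \<and> Suc i \<le> n \<and> \<pi> i = Suc (\<pi> (Suc i)))"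

lemma atLeastAtMost_1_3: "{1..3::nat} = {1,2,3}" "{Suc 0..3::nat} = {1,2,3}" by auto
lemma atLeastAtMost_1_2: "{1..2::nat} = {1,2}" "{Suc 0..2::nat} = {1,2}" by auto

lemma sorted_triples_eq:
  fixes a b c x y z :: nat
  assumes "x < y" "y < z" "a < b" "b < c" "{x,y,z} = {a,b,c}"
  shows "x = a \<and> y = b \<and> z = c"
proof -
  have xa: "x \<in> {a,b,c}" "a \<in> {x,y,z}" "z \<in> {a,b,c}" "c \<in> {x,y,z}" "y \<in> {a,b,c}"
    using assms(5) by blast+
  have "x = a" using xa(1,2) assms(1-4) by auto
  moreover have "z = c" using xa(3,4) assms(1-4) by auto
  moreover have "y = b" using xa(5) assms(1-4) \<open>x = a\<close> \<open>z = c\<close> by auto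
  ultimately show ?thesis by simp
qed

lemma avoids_bv_321_iff: "avoids_bv n \<pi> [3,2,1] {1} {1} \<longleftrightarrow> avoids_321 n \<pi>"
proof -
  have "contains_bv n \<pi> 3 (perm_of_list [3,2,1]) {1} {1} \<longleftrightarrow>
   (\<exists>i c. 1 \<le> i \<and> Suc i < c \<and> c \<le> n \<and> \<pi> (Suc i) < \<pi> i \<and> \<pi> (Suc i) = Suc (\<pi> c))"
  proof
    assume "contains_bv n \<pi> 3 (perm_of_list [3,2,1]) {1} {1}"
    then obtain \<iota> j :: "nat \<Rightarrow> nat" where A: "strict_mono_on {1..3} \<iota>" "\<iota> ` {1..3} \<subseteq> {1..n}"
      "\<forall>a\<in>{1..3}. \<forall>b\<in>{1..3}. \<pi> (\<iota> a) < \<pi> (\<iota> b) \<longleftrightarrow> perm_of_list [3,2,1] a < perm_of_list [3,2,1] b"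
      "strict_mono_on {1..3} j" "j ` {1..3} = (\<lambda>a. \<pi> (\<iota> a)) ` {1..3}"
      "\<forall>x\<in>{1}. ext_seq n 3 \<iota> (x + 1) = ext_seq n 3 \<iota> x + 1"
      "\<forall>y\<in>{1}. ext_seq n 3 j (y + 1) = ext_seq n 3 j y + 1"
      unfolding contains_bv_def by auto
    have i1: "\<iota> 1 < \<iota> 2" "\<iota> 2 < \<iota> 3" using strict_mono_onD[OF A(1), of 1 2] strict_mono_onD[OF A(1), of 2 3] by simp_all
    have j1: "j 1 < j 2" "j 2 < j 3" using strict_mono_onD[OF A(4), of 1 2] strict_mono_onD[OF A(4), of 2 3] by simp_all
    have i2: "\<iota> 1 \<ge> 1" "\<iota> 3 \<le> n" using A(2) unfolding image_subset_iff
      by (auto dest!: bspec[of _ _ 1] bspec[of _ _ 3])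
    have j2: "{j 1, j 2, j 3} = {\<pi> (\<iota> 1), \<pi> (\<iota> 2), \<pi> (\<iota> 3)}" using A(5) by (simp add: atLeastAtMost_1_3)
    have x: "\<iota> 2 = \<iota> 1 + 1" and y: "j 2 = j 1 + 1" using A(6,7) by (auto simp: ext_seq_def numeral_2_eq_2 numeral_3_eq_3)
    have o: "\<pi> (\<iota> 2) < \<pi> (\<iota> 1)" "\<pi> (\<iota> 3) < \<pi> (\<iota> 2)"
      using A(3) by (auto simp: perm_of_list_def atLeastAtMost_1_3 dest!: bspec[of _ _ 1] bspec[of _ _ 2] bspec[of _ _ 3])
    have "{j 1, j 2, j 3} = {\<pi> (\<iota> 3), \<pi> (\<iota> 2), \<pi> (\<iota> 1)}" using j2 by auto
    then have "j 1 = \<pi> (\<iota> 3) \<and> j 2 = \<pi> (\<iota> 2)"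
      using sorted_triples_eq[OF j1 o(2) o(1)] by blast
    then show "\<exists>i c. 1 \<le> i \<and> Suc i < c \<and> c \<le> n \<and> \<pi> (Suc i) < \<pi> i \<and> \<pi> (Suc i) = Suc (\<pi> c)"
      using i1 i2 x y o by (intro exI[of _ "\<iota> 1"] exI[of _ "\<iota> 3"]) auto
  next
    assume "\<exists>i c. 1 \<le> i \<and> Suc i < c \<and> c \<le> n \<and> \<pi> (Suc i) < \<pi> i \<and> \<pi> (Suc i) = Suc (\<pi> c)"
    then obtain i c where h: "1 \<le> i" "Suc i < c" "c \<le> n" "\<pi> (Suc i) < \<pi> i" "\<pi> (Suc i) = Suc (\<pi> c)" by blast
    define \<iota> where "\<iota> t = (if t = 1 then i else if t = 2 then Suc i else c)" for t :: nat
    define j where "j t = (if t = 1 then \<pi> c else if t = 2 then \<pi> (Suc i) else \<pi> i)" for t :: nat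
    show "contains_bv n \<pi> 3 (perm_of_list [3,2,1]) {1} {1}"
      unfolding contains_bv_def
      apply (rule exI[of _ \<iota>], rule exI[of _ j])
      using h by (auto simp: strict_mono_on_def atLeastAtMost_1_3 \<iota>_def j_def perm_of_list_def ext_seq_def)
  qed
  then show ?thesis unfolding avoids_bv_def avoids_321_def by (simp add: eval_nat_numeral)
qed

lemma avoids_bv_231_iff: "avoids_bv n \<pi> [2,3,1] {1} {1} \<longleftrightarrow> avoids_231 n \<pi>"
proof -
  have "contains_bv n \<pi> 3 (perm_of_list [2,3,1]) {1} {1} \<longleftrightarrow>
   (\<exists>i c. 1 \<le> i \<and> Suc i < c \<and> c \<le> n \<and> \<pi> i < \<pi> (Suc i) \<and> \<pi> i = Suc (\<pi> c))"
  proof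
    assume "contains_bv n \<pi> 3 (perm_of_list [2,3,1]) {1} {1}"
    then obtain \<iota> j :: "nat \<Rightarrow> nat" where A: "strict_mono_on {1..3} \<iota>" "\<iota> ` {1..3} \<subseteq> {1..n}"
      "\<forall>a\<in>{1..3}. \<forall>b\<in>{1..3}. \<pi> (\<iota> a) < \<pi> (\<iota> b) \<longleftrightarrow> perm_of_list [2,3,1] a < perm_of_list [2,3,1] b"
      "strict_mono_on {1..3} j" "j ` {1..3} = (\<lambda>a. \<pi> (\<iota> a)) ` {1..3}"
      "\<forall>x\<in>{1}. ext_seq n 3 \<iota> (x + 1) = ext_seq n 3 \<iota> x + 1"
      "\<forall>y\<in>{1}. ext_seq n 3 j (y + 1) = ext_seq n 3 j y + 1"
      unfolding contains_bv_def by auto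
    have i1: "\<iota> 1 < \<iota> 2" "\<iota> 2 < \<iota> 3" using strict_mono_onD[OF A(1), of 1 2] strict_mono_onD[OF A(1), of 2 3] by simp_all
    have j1: "j 1 < j 2" "j 2 < j 3" using strict_mono_onD[OF A(4), of 1 2] strict_mono_onD[OF A(4), of 2 3] by simp_all
    have i2: "\<iota> 1 \<ge> 1" "\<iota> 3 \<le> n" using A(2) unfolding image_subset_iff
      by (auto dest!: bspec[of _ _ 1] bspec[of _ _ 3])
    have j2: "{j 1, j 2, j 3} = {\<pi> (\<iota> 1), \<pi> (\<iota> 2), \<pi> (\<iota> 3)}" using A(5) by (simp add: atLeastAtMost_1_3)
    have x: "\<iota> 2 = \<iota> 1 + 1" and y: "j 2 = j 1 + 1" using A(6,7) by (auto simp: ext_seq_def numeral_2_eq_2 numeral_3_eq_3)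
    have o: "\<pi> (\<iota> 1) < \<pi> (\<iota> 2)" "\<pi> (\<iota> 3) < \<pi> (\<iota> 1)"
      using A(3) by (auto simp: perm_of_list_def atLeastAtMost_1_3 dest!: bspec[of _ _ 1] bspec[of _ _ 2] bspec[of _ _ 3])
    have "{j 1, j 2, j 3} = {\<pi> (\<iota> 3), \<pi> (\<iota> 1), \<pi> (\<iota> 2)}" using j2 by auto
    then have "j 1 = \<pi> (\<iota> 3) \<and> j 2 = \<pi> (\<iota> 1)"
      using sorted_triples_eq[OF j1 o(2) o(1)] by blast
    then show "\<exists>i c. 1 \<le> i \<and> Suc i < c \<and> c \<le> n \<and> \<pi> i < \<pi> (Suc i) \<and> \<pi> i = Suc (\<pi> c)"
      using i1 i2 x y o by (intro exI[of _ "\<iota> 1"] exI[of _ "\<iota> 3"]) auto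
  next
    assume "\<exists>i c. 1 \<le> i \<and> Suc i < c \<and> c \<le> n \<and> \<pi> i < \<pi> (Suc i) \<and> \<pi> i = Suc (\<pi> c)"
    then obtain i c where h: "1 \<le> i" "Suc i < c" "c \<le> n" "\<pi> i < \<pi> (Suc i)" "\<pi> i = Suc (\<pi> c)" by blast
    define \<iota> where "\<iota> t = (if t = 1 then i else if t = 2 then Suc i else c)" for t :: nat
    define j where "j t = (if t = 1 then \<pi> c else if t = 2 then \<pi> i else \<pi> (Suc i))" for t :: nat
    show "contains_bv n \<pi> 3 (perm_of_list [2,3,1]) {1} {1}"
      unfolding contains_bv_def
      apply (rule exI[of _ \<iota>], rule exI[of _ j])
      using h by (auto simp: strict_mono_on_def atLeastAtMost_1_3 \<iota>_def j_def perm_of_list_def ext_seq_def)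
  qed
  then show ?thesis unfolding avoids_bv_def avoids_231_def by (simp add: eval_nat_numeral)
qed

lemma avoids_bv_21_iff: "avoids_bv n \<pi> [2,1] {1} {1} \<longleftrightarrow> avoids_21 n \<pi>"
proof -
  have "contains_bv n \<pi> 2 (perm_of_list [2,1]) {1} {1} \<longleftrightarrow>
   (\<exists>i. 1 \<le> i \<and> Suc i \<le> n \<and> \<pi> i = Suc (\<pi> (Suc i)))"
  proof
    assume "contains_bv n \<pi> 2 (perm_of_list [2,1]) {1} {1}"
    then obtain \<iota> j :: "nat \<Rightarrow> nat" where A: "strict_mono_on {1..2} \<iota>" "\<iota> ` {1..2} \<subseteq> {1..n}"
      "\<forall>a\<in>{1..2}. \<forall>b\<in>{1..2}. \<pi> (\<iota> a) < \<pi> (\<iota> b) \<longleftrightarrow> perm_of_list [2,1] a < perm_of_list [2,1] b"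
      "strict_mono_on {1..2} j" "j ` {1..2} = (\<lambda>a. \<pi> (\<iota> a)) ` {1..2}"
      "\<forall>x\<in>{1}. ext_seq n 2 \<iota> (x + 1) = ext_seq n 2 \<iota> x + 1"
      "\<forall>y\<in>{1}. ext_seq n 2 j (y + 1) = ext_seq n 2 j y + 1"
      unfolding contains_bv_def by auto
    have i1: "\<iota> 1 < \<iota> 2" using strict_mono_onD[OF A(1), of 1 2] by simp
    have j1: "j 1 < j 2" using strict_mono_onD[OF A(4), of 1 2] by simp
    have i2: "\<iota> 1 \<ge> 1" "\<iota> 2 \<le> n" using A(2) unfolding image_subset_iff
      by (auto dest!: bspec[of _ _ 1] bspec[of _ _ 2])
    have j2: "{j 1, j 2} = {\<pi> (\<iota> 1), \<pi> (\<iota> 2)}" using A(5) by (simp add: atLeastAtMost_1_2)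
    have x: "\<iota> 2 = \<iota> 1 + 1" and y: "j 2 = j 1 + 1" using A(6,7) by (auto simp: ext_seq_def numeral_2_eq_2)
    have "\<pi> (\<iota> 2) < \<pi> (\<iota> 1)" using A(3) by (auto simp: perm_of_list_def atLeastAtMost_1_2)
    then have "j 1 = \<pi> (\<iota> 2) \<and> j 2 = \<pi> (\<iota> 1)"
      using j1 j2 by (auto simp: doubleton_eq_iff)
    then show "\<exists>i. 1 \<le> i \<and> Suc i \<le> n \<and> \<pi> i = Suc (\<pi> (Suc i))"
      using i1 i2 x y by (intro exI[of _ "\<iota> 1"]) auto
  next
    assume "\<exists>i. 1 \<le> i \<and> Suc i \<le> n \<and> \<pi> i = Suc (\<pi> (Suc i))"
    then obtain i where h: "1 \<le> i" "Suc i \<le> n" "\<pi> i = Suc (\<pi> (Suc i))" by blast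
    define \<iota> where "\<iota> t = (if t = 1 then i else Suc i)" for t :: nat
    define j where "j t = (if t = 1 then \<pi> (Suc i) else \<pi> i)" for t :: nat
    show "contains_bv n \<pi> 2 (perm_of_list [2,1]) {1} {1}"
      unfolding contains_bv_def
      apply (rule exI[of _ \<iota>], rule exI[of _ j])
      using h by (auto simp: strict_mono_on_def atLeastAtMost_1_2 \<iota>_def j_def perm_of_list_def ext_seq_def)
  qed
  then show ?thesis unfolding avoids_bv_def avoids_21_def by (simp add: eval_nat_numeral)
qed

section \<open>Permutations avoiding (321, {1}, {1})\<close>

definition bump :: "nat \<Rightarrow> nat \<Rightarrow> nat" where
  "bump v x = (if v \<le> x then Suc x else x)"

lemma bump_less_iff[simp]: "bump v x < bump v y \<longleftrightarrow> x < y"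
  by (auto simp: bump_def)
lemma bump_eq_iff[simp]: "bump v x = bump v y \<longleftrightarrow> x = y"
  by (auto simp: bump_def)
lemma bump_neq[simp]: "bump v x \<noteq> v"
  by (auto simp: bump_def)
lemma bump_neq'[simp]: "v \<noteq> bump v x"
  by (auto simp: bump_def)
lemma less_bump_iff: "v < bump v x \<longleftrightarrow> v \<le> x"
  by (auto simp: bump_def)

definition descent_bottoms :: "nat \<Rightarrow> (nat \<Rightarrow> nat) \<Rightarrow> nat set" where
  "descent_bottoms n \<pi> = {\<pi> (Suc i) | i. 1 \<le> i \<and> Suc i \<le> n \<and> \<pi> (Suc i) < \<pi> i}"

text \<open>Appending v as a new last value (raising the old values \<open>\<ge> v\<close>) creates an occurrence
  of the pattern exactly when v was the bottom of a descent.\<close>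
definition active_values :: "nat \<Rightarrow> (nat \<Rightarrow> nat) \<Rightarrow> nat set" where
  "active_values n \<pi> = {1..Suc n} - descent_bottoms n \<pi>"

definition append_value :: "nat \<Rightarrow> nat \<Rightarrow> (nat \<Rightarrow> nat) \<Rightarrow> nat \<Rightarrow> nat" where
  "append_value n v \<pi> = (\<lambda>t. if t = Suc n then v else if 1 \<le> t \<and> t \<le> n then bump v (\<pi> t) else t)"

definition remove_last :: "nat \<Rightarrow> (nat \<Rightarrow> nat) \<Rightarrow> nat \<Rightarrow> nat" where
  "remove_last n c = (\<lambda>t. if 1 \<le> t \<and> t \<le> n then (if c (Suc n) < c t then c t - 1 else c t) else t)"

lemma descent_bottoms_subset: "\<pi> permutes {1..n} \<Longrightarrow> descent_bottoms n \<pi> \<subseteq> {1..n}"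
  unfolding descent_bottoms_def using permutes_in_image[of \<pi> "{1..n}"] by fastforce

lemma finite_active_values: "finite (active_values n \<pi>)" unfolding active_values_def by auto

lemma card_active_values: "\<pi> permutes {1..n} \<Longrightarrow> card (active_values n \<pi>) = Suc n - card (descent_bottoms n \<pi>)"
proof -
  assume "\<pi> permutes {1..n}"
  then have "descent_bottoms n \<pi> \<subseteq> {1..Suc n}" using descent_bottoms_subset by fastforce
  then show ?thesis unfolding active_values_def by (simp add: card_Diff_subset finite_subset)
qed

lemma card_descent_bottoms_le: "\<pi> permutes {1..n} \<Longrightarrow> card (descent_bottoms n \<pi>) \<le> n"
  using descent_bottoms_subset card_mono[of "{1..n}" "descent_bottoms n \<pi>"] by fastforce

lemma append_value_permutes:
  assumes p: "\<pi> permutes {1..n}" and v: "v \<in> {1..Suc n}"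
  shows "append_value n v \<pi> permutes {1..Suc n}"
proof (rule inj_imp_permutes)
  have im: "\<And>t. t \<in> {1..n} \<Longrightarrow> \<pi> t \<in> {1..n}" using permutes_in_image[OF p] by blast
  have inj: "inj \<pi>" using permutes_inj[OF p] .
  show "inj_on (append_value n v \<pi>) {1..Suc n}"
  proof (rule inj_onI)
    fix x y assume xy: "x \<in> {1..Suc n}" "y \<in> {1..Suc n}" "append_value n v \<pi> x = append_value n v \<pi> y"
    then show "x = y" using inj by (auto simp: append_value_def inj_eq split: if_splits)
  qed
  show "\<And>x. x \<in> {1..Suc n} \<Longrightarrow> append_value n v \<pi> x \<in> {1..Suc n}"
    using im v by (auto simp: append_value_def bump_def)
qed (auto simp: append_value_def)

lemma avoids_321_append_value:
  assumes p: "\<pi> permutes {1..n}" and av: "avoids_321 n \<pi>" and v: "v \<in> active_values n \<pi>"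
  shows "avoids_321 (Suc n) (append_value n v \<pi>)"
  unfolding avoids_321_def
proof
  assume "\<exists>i c. 1 \<le> i \<and> Suc i < c \<and> c \<le> Suc n \<and> append_value n v \<pi> (Suc i) < append_value n v \<pi> i \<and>
        append_value n v \<pi> (Suc i) = Suc (append_value n v \<pi> c)"
  then obtain i c where h: "1 \<le> i" "Suc i < c" "c \<le> Suc n" "append_value n v \<pi> (Suc i) < append_value n v \<pi> i"
    "append_value n v \<pi> (Suc i) = Suc (append_value n v \<pi> c)" by blast
  have a1: "append_value n v \<pi> i = bump v (\<pi> i)" "append_value n v \<pi> (Suc i) = bump v (\<pi> (Suc i))"
    using h by (auto simp: append_value_def)
  have desc: "\<pi> (Suc i) < \<pi> i" using h(4) a1 by simp
  show False
  proof (cases "c = Suc n")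
    case True
    then have "bump v (\<pi> (Suc i)) = Suc v" using h(5) a1 by (simp add: append_value_def)
    then have "\<pi> (Suc i) = v" by (auto simp: bump_def split: if_splits)
    then have "v \<in> descent_bottoms n \<pi>" unfolding descent_bottoms_def using h True desc by auto
    then show False using v by (simp add: active_values_def)
  next
    case False
    then have "append_value n v \<pi> c = bump v (\<pi> c)" using h by (auto simp: append_value_def)
    then have e: "bump v (\<pi> (Suc i)) = Suc (bump v (\<pi> c))" using h(5) a1 by simp
    have "\<pi> c < \<pi> (Suc i)" using e by (metis lessI bump_less_iff)
    then have "\<pi> (Suc i) = Suc (\<pi> c)" using e by (auto simp: bump_def split: if_splits)
    then show False using av h False desc unfolding avoids_321_def by force
  qed
qed

lemma remove_last_append_value:
  assumes p: "\<pi> permutes {1..n}"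
  shows "remove_last n (append_value n v \<pi>) = \<pi>"
proof
  fix t show "remove_last n (append_value n v \<pi>) t = \<pi> t"
    using permutes_not_in[OF p, of t] by (auto simp: remove_last_def append_value_def bump_def)
qed

lemma remove_last_permutes:
  assumes c: "c permutes {1..Suc n}"
  shows "remove_last n c permutes {1..n}"
proof (rule inj_imp_permutes)
  have im: "\<And>t. t \<in> {1..Suc n} \<Longrightarrow> c t \<in> {1..Suc n}" using permutes_in_image[OF c] by blast
  have inj: "inj c" using permutes_inj[OF c] .
  have ne: "\<And>t. t \<in> {1..n} \<Longrightarrow> c t \<noteq> c (Suc n)" using inj by (auto simp: inj_eq)
  show "inj_on (remove_last n c) {1..n}"
  proof (rule inj_onI)
    fix x y assume xy: "x \<in> {1..n}" "y \<in> {1..n}" "remove_last n c x = remove_last n c y"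
    have "c x \<noteq> c (Suc n)" "c y \<noteq> c (Suc n)" using ne xy by auto
    then have "c x = c y" using xy by (auto simp: remove_last_def split: if_splits)
    then show "x = y" using inj by (simp add: inj_eq)
  qed
  show "remove_last n c x \<in> {1..n}" if x: "x \<in> {1..n}" for x
    using x im[of x] im[of "Suc n"] ne[OF x] by (auto simp: remove_last_def)
qed (auto simp: remove_last_def)

lemma append_value_remove_last:
  assumes c: "c permutes {1..Suc n}"
  shows "append_value n (c (Suc n)) (remove_last n c) = c"
proof
  fix t
  have "c t \<noteq> c (Suc n)" if "t \<in> {1..n}"
    using that permutes_inj[OF c] by (auto simp: inj_eq)
  then show "append_value n (c (Suc n)) (remove_last n c) t = c t"
    using permutes_not_in[OF c, of t]
    by (cases "t \<in> {1..n}") (auto simp: append_value_def remove_last_def bump_def)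
qed

lemma remove_last_avoids_321:
  assumes c: "c permutes {1..Suc n}" and av: "avoids_321 (Suc n) c"
  shows "c (Suc n) \<in> active_values n (remove_last n c)" "avoids_321 n (remove_last n c)"
proof -
  let ?v = "c (Suc n)" and ?\<pi> = "remove_last n c"
  have c_eq: "c t = bump ?v (?\<pi> t)" if "1 \<le> t" "t \<le> n" for t
    using that fun_cong[OF append_value_remove_last[OF c], of t] by (simp add: append_value_def)
  have notD: "?v \<notin> descent_bottoms n ?\<pi>"
  proof
    assume "?v \<in> descent_bottoms n ?\<pi>"
    then obtain i where i: "1 \<le> i" "Suc i \<le> n" "?\<pi> (Suc i) < ?\<pi> i" "?v = ?\<pi> (Suc i)"
      unfolding descent_bottoms_def by blast
    then have "c (Suc i) = Suc ?v" "c (Suc i) < c i" using c_eq[of i] c_eq[of "Suc i"] by (auto simp: bump_def)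
    then show False using av i unfolding avoids_321_def by force
  qed
  then show "?v \<in> active_values n ?\<pi>"
    using permutes_in_image[OF c] by (simp add: active_values_def)
  show "avoids_321 n ?\<pi>"
    unfolding avoids_321_def
  proof
    assume "\<exists>i d. 1 \<le> i \<and> Suc i < d \<and> d \<le> n \<and> ?\<pi> (Suc i) < ?\<pi> i \<and> ?\<pi> (Suc i) = Suc (?\<pi> d)"
    then obtain i d where h: "1 \<le> i" "Suc i < d" "d \<le> n" "?\<pi> (Suc i) < ?\<pi> i" "?\<pi> (Suc i) = Suc (?\<pi> d)"
      by blast
    have "?v \<noteq> ?\<pi> (Suc i)" using notD h unfolding descent_bottoms_def by fastforce
    then have "c (Suc i) = Suc (c d)" "c (Suc i) < c i"
      using h c_eq[of i] c_eq[of "Suc i"] c_eq[of d] by (auto simp: bump_def)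
    then show False using av h unfolding avoids_321_def by force
  qed
qed

lemma descent_bottoms_append_value:
  assumes p: "\<pi> permutes {1..n}" and n: "n \<ge> 1"
  shows "descent_bottoms (Suc n) (append_value n v \<pi>) = bump v ` descent_bottoms n \<pi> \<union> (if v \<le> \<pi> n then {v} else {})"
proof -
  have A: "\<And>i. 1 \<le> i \<Longrightarrow> i \<le> n \<Longrightarrow> append_value n v \<pi> i = bump v (\<pi> i)" by (auto simp: append_value_def)
  have B: "append_value n v \<pi> (Suc n) = v" by (simp add: append_value_def)
  show ?thesis
  proof (rule set_eqI)
    fix w
    show "w \<in> descent_bottoms (Suc n) (append_value n v \<pi>) \<longleftrightarrow> w \<in> bump v ` descent_bottoms n \<pi> \<union> (if v \<le> \<pi> n then {v} else {})"
    proof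
      assume "w \<in> descent_bottoms (Suc n) (append_value n v \<pi>)"
      then obtain i where i: "1 \<le> i" "Suc i \<le> Suc n" "append_value n v \<pi> (Suc i) < append_value n v \<pi> i"
        "w = append_value n v \<pi> (Suc i)" unfolding descent_bottoms_def by blast
      show "w \<in> bump v ` descent_bottoms n \<pi> \<union> (if v \<le> \<pi> n then {v} else {})"
      proof (cases "Suc i = Suc n")
        case True
        then show ?thesis using i B A[of n] n by (auto simp: less_bump_iff)
      next
        case False
        then have "\<pi> (Suc i) < \<pi> i" "w = bump v (\<pi> (Suc i))" using i A[of i] A[of "Suc i"] by auto
        then show ?thesis using i False unfolding descent_bottoms_def
          by (intro UnI1 image_eqI[of _ _ "\<pi> (Suc i)"]) auto
      qed
    next
      assume "w \<in> bump v ` descent_bottoms n \<pi> \<union> (if v \<le> \<pi> n then {v} else {})"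
      then show "w \<in> descent_bottoms (Suc n) (append_value n v \<pi>)"
      proof
        assume "w \<in> bump v ` descent_bottoms n \<pi>"
        then obtain i where i: "1 \<le> i" "Suc i \<le> n" "\<pi> (Suc i) < \<pi> i" "w = bump v (\<pi> (Suc i))"
          unfolding descent_bottoms_def by blast
        then show ?thesis unfolding descent_bottoms_def using A[of i] A[of "Suc i"]
          by (intro CollectI exI[of _ i]) auto
      next
        assume "w \<in> (if v \<le> \<pi> n then {v} else {})"
        then have "w = v" "v \<le> \<pi> n" by (auto split: if_splits)
        then show ?thesis unfolding descent_bottoms_def using A[of n] B n
          by (intro CollectI exI[of _ n]) (auto simp: less_bump_iff)
      qed
    qed
  qed
qed

definition label_321 :: "nat \<times> (nat \<Rightarrow> nat) \<Rightarrow> nat \<times> nat" where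
  "label_321 x = (case x of (n, \<pi>) \<Rightarrow> (card (active_values n \<pi>), rank_in (active_values n \<pi>) (\<pi> n)))"

lemma label_321_append_value:
  assumes p: "\<pi> permutes {1..n}" and n: "n \<ge> 1" and v: "v \<in> active_values n \<pi>"
  shows "label_321 (Suc n, append_value n v \<pi>) =
    (if rank_in (active_values n \<pi>) v \<le> rank_in (active_values n \<pi>) (\<pi> n) then (card (active_values n \<pi>), rank_in (active_values n \<pi>) v - 1)
     else (Suc (card (active_values n \<pi>)), rank_in (active_values n \<pi>) v))"
proof -
  let ?A = "active_values n \<pi>" and ?D = "descent_bottoms n \<pi>" and ?c = "append_value n v \<pi>"
  have cp: "?c permutes {1..Suc n}" using append_value_permutes[OF p] v by (auto simp: active_values_def)
  have D': "descent_bottoms (Suc n) ?c = bump v ` ?D \<union> (if v \<le> \<pi> n then {v} else {})" using descent_bottoms_append_value[OF p n] .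
  have cv: "?c (Suc n) = v" by (simp add: append_value_def)
  have iff: "rank_in ?A v \<le> rank_in ?A (\<pi> n) \<longleftrightarrow> v \<le> \<pi> n" using rank_in_le_iff[OF finite_active_values v] .
  have finD: "finite ?D" using descent_bottoms_subset[OF p] finite_subset by blast
  have cardsh: "card (bump v ` ?D) = card ?D" by (rule card_image) (simp add: inj_on_def)
  have cD': "card (descent_bottoms (Suc n) ?c) = card ?D + (if v \<le> \<pi> n then 1 else 0)"
  proof -
    have "v \<notin> bump v ` ?D" by auto
    then show ?thesis using finD cardsh by (simp add: D')
  qed
  have cA: "card ?A = Suc n - card ?D" using card_active_values[OF p] .
  have cA': "card (active_values (Suc n) ?c) = Suc (Suc n) - card (descent_bottoms (Suc n) ?c)" using card_active_values[OF cp] .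
  have le: "card ?D \<le> n" using card_descent_bottoms_le[OF p] .
  have k: "card (active_values (Suc n) ?c) = (if v \<le> \<pi> n then card ?A else Suc (card ?A))"
    using cA cA' cD' le by auto
  have vr: "v \<le> Suc n" "1 \<le> v" "v \<notin> ?D" using v by (auto simp: active_values_def)
  have set1: "{w \<in> active_values (Suc n) ?c. w \<le> v} = {w \<in> ?A. w < v} \<union> (if v \<le> \<pi> n then {} else {v})"
  proof (rule set_eqI)
    fix w
    have "w < v \<Longrightarrow> w \<in> bump v ` ?D \<longleftrightarrow> w \<in> ?D"
      by (auto simp: bump_def image_iff split: if_splits)
    then show "w \<in> {w \<in> active_values (Suc n) ?c. w \<le> v} \<longleftrightarrow> w \<in> {w \<in> ?A. w < v} \<union> (if v \<le> \<pi> n then {} else {v})"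
      using vr unfolding active_values_def D' by (cases "w < v") auto
  qed
  have set2: "{w \<in> ?A. w \<le> v} = insert v {w \<in> ?A. w < v}" using v by auto
  have rA: "rank_in ?A v = Suc (card {w \<in> ?A. w < v})"
    unfolding rank_in_def set2 using finite_active_values by (subst card_insert_disjoint) auto
  have rA': "rank_in (active_values (Suc n) ?c) v = (if v \<le> \<pi> n then card {w \<in> ?A. w < v} else Suc (card {w \<in> ?A. w < v}))"
    unfolding rank_in_def set1 using finite_active_values by auto
  show ?thesis unfolding label_321_def using k rA rA' iff cv by auto
qed

definition level_321 :: "nat \<Rightarrow> (nat \<times> (nat \<Rightarrow> nat)) set" where
  "level_321 n = (\<lambda>\<pi>. (n, \<pi>)) ` {\<pi>. \<pi> permutes {1..n} \<and> avoids_321 n \<pi>}"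

definition children_321 :: "nat \<times> (nat \<Rightarrow> nat) \<Rightarrow> (nat \<times> (nat \<Rightarrow> nat)) set" where
  "children_321 x = (case x of (n, \<pi>) \<Rightarrow> (\<lambda>v. (Suc n, append_value n v \<pi>)) ` active_values n \<pi>)"

definition parent_321 :: "nat \<times> (nat \<Rightarrow> nat) \<Rightarrow> nat \<times> (nat \<Rightarrow> nat)" where
  "parent_321 x = (case x of (n, c) \<Rightarrow> (n - 1, remove_last (n - 1) c))"

lemma level_321_Suc: "level_321 (Suc n) = (\<Union>x\<in>level_321 n. children_321 x)"
proof (rule set_eqI, rule iffI)
  fix y assume "y \<in> level_321 (Suc n)"
  then obtain c where y: "y = (Suc n, c)" "c permutes {1..Suc n}" "avoids_321 (Suc n) c"
    unfolding level_321_def by auto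
  then show "y \<in> (\<Union>x\<in>level_321 n. children_321 x)"
    unfolding level_321_def children_321_def
    using remove_last_permutes[OF y(2)] remove_last_avoids_321[OF y(2,3)] append_value_remove_last[OF y(2)]
    by (intro UN_I[of "(n, remove_last n c)"]) (auto intro!: image_eqI[of _ _ "c (Suc n)"])
next
  fix y assume "y \<in> (\<Union>x\<in>level_321 n. children_321 x)"
  then obtain \<pi> v where h: "\<pi> permutes {1..n}" "avoids_321 n \<pi>" "v \<in> active_values n \<pi>"
    "y = (Suc n, append_value n v \<pi>)"
    unfolding level_321_def children_321_def by auto
  then have "append_value n v \<pi> permutes {1..Suc n}"
    using append_value_permutes[OF h(1)] by (auto simp: active_values_def)
  then show "y \<in> level_321 (Suc n)"
    unfolding level_321_def using avoids_321_append_value[OF h(1-3)] h(4) by auto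
qed

lemma parent_children_321: "x \<in> level_321 n \<Longrightarrow> c \<in> children_321 x \<Longrightarrow> parent_321 c = x"
  unfolding level_321_def children_321_def parent_321_def
  by (auto simp: remove_last_append_value)

lemma finite_children_321: "finite (children_321 x)"
  unfolding children_321_def by (simp add: finite_active_values split: prod.split)

lemma sum_children_321:
  assumes "n \<ge> 1" and "x \<in> level_321 n"
  shows "(\<Sum>c\<in>children_321 x. tree_count m (label_321 c)) = tree_count (Suc m) (label_321 x)"
proof -
  obtain \<pi> where x: "x = (n, \<pi>)" "\<pi> permutes {1..n}" using assms(2) unfolding level_321_def by auto
  let ?A = "active_values n \<pi>"
  have inj: "inj_on (\<lambda>v. (Suc n, append_value n v \<pi>)) ?A"
  proof (rule inj_onI)
    fix a b assume "(Suc n, append_value n a \<pi>) = (Suc n, append_value n b \<pi>)"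
    then have "append_value n a \<pi> (Suc n) = append_value n b \<pi> (Suc n)" by simp
    then show "a = b" by (simp add: append_value_def)
  qed
  have "(\<Sum>c\<in>(\<lambda>v. (Suc n, append_value n v \<pi>)) ` ?A. tree_count m (label_321 c)) =
      tree_count (Suc m) (card ?A, rank_in ?A (\<pi> n))"
  proof (rule sum_tree_count_ranked_children[OF bij_betw_rank_in[OF finite_active_values] _ inj])
    show "rank_in ?A (\<pi> n) \<le> card ?A" by (simp add: rank_in_le_card finite_active_values)
  qed (rule label_321_append_value[OF x(2) assms(1)])
  then show ?thesis unfolding children_321_def x label_321_def by simp
qed

lemma card_avoids_321:
  "card {\<pi>. \<pi> permutes {1..Suc j} \<and> avoids_321 (Suc j) \<pi>} = tree_count j (2, 1)"
proof -
  have root: "level_321 1 = {(1, id)}"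
    unfolding level_321_def by (auto simp: avoids_321_def)
  have "active_values 1 id = {1, 2}"
    unfolding active_values_def descent_bottoms_def by auto
  moreover have "{w\<in>{1, 2::nat}. w \<le> 1} = {1}" by auto
  ultimately have label_root: "label_321 (1, id) = (2, 1)"
    unfolding label_321_def rank_in_def by simp
  have "card (level_321 (Suc j)) = tree_count j (2, 1)"
    by (rule card_level_generating_tree[where level = level_321 and children = children_321
          and parent = parent_321 and label = label_321, OF _ _ _ _ root label_root])
      (simp_all add: level_321_Suc parent_children_321 sum_children_321 finite_children_321)
  moreover have "card (level_321 (Suc j)) = card {\<pi>. \<pi> permutes {1..Suc j} \<and> avoids_321 (Suc j) \<pi>}"
    unfolding level_321_def by (rule card_image) (simp add: inj_on_def)
  ultimately show ?thesis by simp
qed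

section \<open>Permutations avoiding (231, {1}, {1}) and (21, {1}, {1})\<close>

definition insert_max :: "nat \<Rightarrow> nat \<Rightarrow> (nat \<Rightarrow> nat) \<Rightarrow> nat \<Rightarrow> nat" where
  "insert_max N g \<sigma> t =
     (if t \<le> g then \<sigma> t else if t = Suc g then Suc N else if t \<le> Suc N then \<sigma> (t - 1) else t)"

definition remove_max :: "nat \<Rightarrow> nat \<Rightarrow> (nat \<Rightarrow> nat) \<Rightarrow> nat \<Rightarrow> nat" where
  "remove_max N g \<tau> t = (if t \<le> g then \<tau> t else if t \<le> N then \<tau> (Suc t) else t)"

text \<open>Inserting a maximum right after position h creates an occurrence of the 231-pattern
  exactly when the value \<open>\<sigma> h - 1\<close> occurs to the right of h, and an adjacent 21 exactly
  when \<open>\<sigma> (h + 1) = N\<close>.\<close>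
definition safe_gap :: "(nat \<Rightarrow> nat) \<Rightarrow> nat \<Rightarrow> bool" where
  "safe_gap \<sigma> h \<longleftrightarrow> h = 0 \<or> \<sigma> h = 1 \<or> (\<exists>t. 1 \<le> t \<and> t < h \<and> Suc (\<sigma> t) = \<sigma> h)"

definition active_gaps :: "nat \<Rightarrow> (nat \<Rightarrow> nat) \<Rightarrow> nat set" where
  "active_gaps N \<sigma> = {h \<in> {0..N}. safe_gap \<sigma> h \<and> \<sigma> (Suc h) \<noteq> N}"

lemma insert_max_below [simp]: "t \<le> g \<Longrightarrow> insert_max N g \<sigma> t = \<sigma> t"
  and insert_max_at [simp]: "insert_max N g \<sigma> (Suc g) = Suc N"
  and insert_max_above: "Suc g < t \<Longrightarrow> t \<le> Suc N \<Longrightarrow> insert_max N g \<sigma> t = \<sigma> (t - 1)"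
  by (simp_all add: insert_max_def)

lemma remove_max_below [simp]: "t \<le> g \<Longrightarrow> remove_max N g \<tau> t = \<tau> t"
  and remove_max_above: "g < t \<Longrightarrow> t \<le> N \<Longrightarrow> remove_max N g \<tau> t = \<tau> (Suc t)"
  by (simp_all add: remove_max_def)

lemma safe_gap_cong:
  assumes "\<And>t. t \<le> h \<Longrightarrow> \<sigma> t = \<sigma>' t"
  shows "safe_gap \<sigma> h \<longleftrightarrow> safe_gap \<sigma>' h"
  unfolding safe_gap_def using assms by (auto simp: less_imp_le_nat)

lemma insert_max_permutes:
  assumes p: "\<sigma> permutes {1..N}" and g: "g \<le> N"
  shows "insert_max N g \<sigma> permutes {1..Suc N}"
proof (rule inj_imp_permutes)
  show "inj_on (insert_max N g \<sigma>) {1..Suc N}"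
  proof (rule inj_onI)
    fix x y assume xy: "x \<in> {1..Suc N}" "y \<in> {1..Suc N}" "insert_max N g \<sigma> x = insert_max N g \<sigma> y"
    show "x = y"
    proof (cases "x = Suc g \<or> y = Suc g")
      case True
      have le: "insert_max N g \<sigma> t \<le> N" if "t \<in> {1..Suc N}" "t \<noteq> Suc g" for t
      proof (cases "t \<le> g")
        case True then show ?thesis using that permutes_in_atLeastAtMost[OF p, of t] g by (simp add: insert_max_def)
      next
        case False
        then have "1 \<le> t - 1" "t - 1 \<le> N" using that by auto
        then show ?thesis using False that permutes_in_atLeastAtMost[OF p, of "t - 1"] by (simp add: insert_max_def)
      qed
      have "insert_max N g \<sigma> (Suc g) = Suc N" by (simp add: insert_max_def)
      then show ?thesis using True xy le[of x] le[of y] by force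
    next
      case False
      then show ?thesis using xy permutes_eq_iff[OF p] by (auto simp: insert_max_def split: if_splits)
    qed
  qed
  show "\<And>x. x \<in> {1..Suc N} \<Longrightarrow> insert_max N g \<sigma> x \<in> {1..Suc N}"
  proof -
    fix x assume x: "x \<in> {1..Suc N}"
    show "insert_max N g \<sigma> x \<in> {1..Suc N}"
    proof (cases "x \<le> g")
      case True then show ?thesis using x g permutes_in_atLeastAtMost[OF p, of x] by (simp add: insert_max_def)
    next
      case False
      then have "x = Suc g \<or> (1 \<le> x - 1 \<and> x - 1 \<le> N)" using x by auto
      then show ?thesis using False x permutes_in_atLeastAtMost[OF p, of "x - 1"] by (auto simp: insert_max_def)
    qed
  qed
qed (use permutes_outside_atLeastAtMost[OF p] g in \<open>auto simp: insert_max_def\<close>)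

lemma remove_max_permutes:
  assumes p: "\<tau> permutes {1..Suc N}" and g: "g \<le> N" and tg: "\<tau> (Suc g) = Suc N"
  shows "remove_max N g \<tau> permutes {1..N}"
proof (rule inj_imp_permutes)
  show "inj_on (remove_max N g \<tau>) {1..N}"
  proof (rule inj_onI)
    fix x y assume xy: "x \<in> {1..N}" "y \<in> {1..N}" "remove_max N g \<tau> x = remove_max N g \<tau> y"
    then show "x = y" using permutes_eq_iff[OF p] by (auto simp: remove_max_def split: if_splits)
  qed
  show "\<And>x. x \<notin> {1..N} \<Longrightarrow> remove_max N g \<tau> x = x"
    using permutes_outside_atLeastAtMost[OF p] g by (auto simp: remove_max_def)
  show "\<And>x. x \<in> {1..N} \<Longrightarrow> remove_max N g \<tau> x \<in> {1..N}"
  proof -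
    fix x assume x: "x \<in> {1..N}"
    have "remove_max N g \<tau> x \<noteq> Suc N" using x tg[symmetric] permutes_eq_iff[OF p] by (auto simp: remove_max_def)
    moreover have "1 \<le> remove_max N g \<tau> x \<and> remove_max N g \<tau> x \<le> Suc N"
      using x permutes_in_atLeastAtMost[OF p] by (auto simp: remove_max_def)
    ultimately show "remove_max N g \<tau> x \<in> {1..N}" by auto
  qed
qed (auto simp: remove_max_def)

lemma remove_max_insert_max:
  assumes p: "\<sigma> permutes {1..N}" and g: "g \<le> N"
  shows "remove_max N g (insert_max N g \<sigma>) = \<sigma>"
proof
  fix t show "remove_max N g (insert_max N g \<sigma>) t = \<sigma> t"
    using permutes_outside_atLeastAtMost[OF p, of t] g by (auto simp: remove_max_def insert_max_def)
qed

lemma insert_max_remove_max: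
  assumes p: "\<tau> permutes {1..Suc N}" and g: "g \<le> N" and tg: "\<tau> (Suc g) = Suc N"
  shows "insert_max N g (remove_max N g \<tau>) = \<tau>"
proof
  fix t show "insert_max N g (remove_max N g \<tau>) t = \<tau> t"
    using permutes_outside_atLeastAtMost[OF p, of t] g tg by (auto simp: remove_max_def insert_max_def)
qed

lemma avoids_21_insert_max:
  assumes p: "\<sigma> permutes {1..N}" and av: "avoids_21 N \<sigma>" and g: "g \<le> N" "\<sigma> (Suc g) \<noteq> N"
  shows "avoids_21 (Suc N) (insert_max N g \<sigma>)"
  unfolding avoids_21_def
proof
  let ?\<tau> = "insert_max N g \<sigma>"
  assume "\<exists>i. 1 \<le> i \<and> Suc i \<le> Suc N \<and> ?\<tau> i = Suc (?\<tau> (Suc i))"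
  then obtain i where i: "1 \<le> i" "Suc i \<le> Suc N" "?\<tau> i = Suc (?\<tau> (Suc i))" by blast
  consider "Suc i \<le> g" | "i = g" | "i = Suc g" | "Suc g < i" by linarith
  then show False
  proof cases
    case 1 then show ?thesis using i av g unfolding avoids_21_def by auto
  next
    case 2 then show ?thesis using i permutes_in_atLeastAtMost[OF p, of g] by auto
  next
    case 3 then show ?thesis using i g insert_max_above[of g "Suc i"] by auto
  next
    case 4
    then have "\<sigma> (i - 1) = Suc (\<sigma> (Suc (i - 1)))"
      using i insert_max_above[of g i] insert_max_above[of g "Suc i"] by auto
    moreover have "1 \<le> i - 1" "Suc (i - 1) \<le> N" using 4 i by auto
    ultimately show ?thesis using av unfolding avoids_21_def by blast
  qed
qed

lemma avoids_231_insert_max: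
  assumes p: "\<sigma> permutes {1..N}" and av: "avoids_231 N \<sigma>" and g: "g \<le> N" "safe_gap \<sigma> g"
  shows "avoids_231 (Suc N) (insert_max N g \<sigma>)"
  unfolding avoids_231_def
proof
  let ?\<tau> = "insert_max N g \<sigma>"
  have bound: "?\<tau> t \<le> Suc N" if "1 \<le> t" "t \<le> Suc N" for t
    using permutes_in_atLeastAtMost[OF insert_max_permutes[OF p g(1)]] that by blast
  have above: "?\<tau> t = \<sigma> (t - 1)" if "Suc g < t" "t \<le> Suc N" for t
    using insert_max_above that .
  assume "\<exists>i c. 1 \<le> i \<and> Suc i < c \<and> c \<le> Suc N \<and> ?\<tau> i < ?\<tau> (Suc i) \<and> ?\<tau> i = Suc (?\<tau> c)"
  then obtain i c where h: "1 \<le> i" "Suc i < c" "c \<le> Suc N" "?\<tau> i < ?\<tau> (Suc i)" "?\<tau> i = Suc (?\<tau> c)"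
    by blast
  have av': "\<not> (1 \<le> a \<and> Suc a < b \<and> b \<le> N \<and> \<sigma> a < \<sigma> (Suc a) \<and> \<sigma> a = Suc (\<sigma> b))" for a b
    using av unfolding avoids_231_def by blast
  have cg: "c \<noteq> Suc g" using h bound[of i] by auto
  consider "Suc i \<le> g" | "i = g" | "i = Suc g" | "Suc g < i" by linarith
  then show False
  proof cases
    case 1
    show ?thesis
    proof (cases "c \<le> g")
      case True
      then show ?thesis using h 1 g av'[of i c] by auto
    next
      case False
      then show ?thesis using h 1 cg above[of c] av'[of i "c - 1"] by auto
    qed
  next
    case 2
    then have c: "\<sigma> g = Suc (\<sigma> (c - 1))" "1 \<le> c - 1" "c - 1 \<le> N" "g < c - 1" using h above[of c] by auto
    then have "\<sigma> g \<noteq> 1" "g \<noteq> 0" using h 2 permutes_in_atLeastAtMost[OF p, of "c - 1"] by auto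
    then obtain t where "t < g" "\<sigma> t = \<sigma> (c - 1)" using g(2) c(1) unfolding safe_gap_def by auto
    then show ?thesis using permutes_eq_iff[OF p] c(4) by auto
  next
    case 3
    then show ?thesis using h bound[of "Suc i"] by auto
  next
    case 4
    then have "\<sigma> (i - 1) < \<sigma> (Suc (i - 1)) \<and> \<sigma> (i - 1) = Suc (\<sigma> (c - 1))"
      using h above[of i] above[of "Suc i"] above[of c] by auto
    then show ?thesis using 4 h av'[of "i - 1" "c - 1"] by auto
  qed
qed

lemma safe_gap_before_max:
  assumes p: "\<sigma> permutes {1..N}" and av: "avoids_231 N \<sigma>" and m: "\<sigma> (Suc m) = N" "Suc m \<le> N"
  shows "safe_gap \<sigma> m"
proof (cases "m = 0 \<or> \<sigma> m = 1")
  case True then show ?thesis by (auto simp: safe_gap_def)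
next
  case False
  then have m1: "1 \<le> m" "\<sigma> m \<noteq> 1" by auto
  have "\<sigma> m \<noteq> N" using m permutes_eq_iff[OF p, of m "Suc m"] by auto
  then have bounds: "2 \<le> \<sigma> m" "\<sigma> m < N" using permutes_in_atLeastAtMost[OF p, of m] m m1 by auto
  have "\<exists>t. 1 \<le> t \<and> t \<le> N \<and> \<sigma> t = \<sigma> m - 1"
    by (rule permutes_atLeastAtMost_surj[OF p]) (use bounds in auto)
  then obtain t where t: "1 \<le> t" "t \<le> N" "\<sigma> t = \<sigma> m - 1" by blast
  have "t \<noteq> m" "t \<noteq> Suc m" using t m bounds by auto
  moreover have "\<not> Suc m < t"
  proof
    assume "Suc m < t"
    moreover have "\<sigma> m < \<sigma> (Suc m)" "\<sigma> m = Suc (\<sigma> t)" using m t bounds by auto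
    ultimately show False using av m1 t unfolding avoids_231_def by blast
  qed
  ultimately have "t < m" by auto
  then show ?thesis unfolding safe_gap_def using t bounds by (intro disjI2) auto
qed

lemma avoids_231_remove_max:
  assumes tp: "\<tau> permutes {1..Suc N}" and av: "avoids_231 (Suc N) \<tau>"
    and tg: "\<tau> (Suc g) = Suc N" and gN: "g \<le> N"
  shows "avoids_231 N (remove_max N g \<tau>)"
  unfolding avoids_231_def
proof
  let ?\<sigma> = "remove_max N g \<tau>"
  have av': "\<not> (1 \<le> a \<and> Suc a < b \<and> b \<le> Suc N \<and> \<tau> a < \<tau> (Suc a) \<and> \<tau> a = Suc (\<tau> b))" for a b
    using av unfolding avoids_231_def by blast
  have tgle: "\<tau> g < Suc N" if "1 \<le> g"
    using permutes_in_atLeastAtMost[OF tp, of g] permutes_eq_iff[OF tp, of g "Suc g"] tg that gN by auto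
  assume "\<exists>i c. 1 \<le> i \<and> Suc i < c \<and> c \<le> N \<and> ?\<sigma> i < ?\<sigma> (Suc i) \<and> ?\<sigma> i = Suc (?\<sigma> c)"
  then obtain i c where h: "1 \<le> i" "Suc i < c" "c \<le> N" "?\<sigma> i < ?\<sigma> (Suc i)" "?\<sigma> i = Suc (?\<sigma> c)"
    by blast
  define c' where "c' = (if c \<le> g then c else Suc c)"
  have sc: "?\<sigma> c = \<tau> c'" "c \<le> c'" "c' \<le> Suc N"
    using remove_max_above[of g c] h unfolding c'_def by auto
  consider "Suc i \<le> g" | "i = g" | "g < i" by linarith
  then show False
  proof cases
    case 1 then show ?thesis using h sc av'[of i c'] by auto
  next
    case 2 then show ?thesis using h tgle tg remove_max_above[of g c] av'[of g "Suc c"] by auto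
  next
    case 3
    then show ?thesis
      using h remove_max_above[of g i] remove_max_above[of g "Suc i"] remove_max_above[of g c]
        av'[of "Suc i" "Suc c"] by auto
  qed
qed

lemma avoids_21_remove_max:
  assumes tp: "\<tau> permutes {1..Suc N}" and av21: "avoids_21 (Suc N) \<tau>" and av231: "avoids_231 (Suc N) \<tau>"
    and tg: "\<tau> (Suc g) = Suc N" and gN: "g \<le> N"
  shows "avoids_21 N (remove_max N g \<tau>)"
  unfolding avoids_21_def
proof
  let ?\<sigma> = "remove_max N g \<tau>"
  have av': "\<not> (1 \<le> a \<and> Suc a \<le> Suc N \<and> \<tau> a = Suc (\<tau> (Suc a)))" for a
    using av21 unfolding avoids_21_def by blast
  assume "\<exists>i. 1 \<le> i \<and> Suc i \<le> N \<and> ?\<sigma> i = Suc (?\<sigma> (Suc i))"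
  then obtain i where i: "1 \<le> i" "Suc i \<le> N" "?\<sigma> i = Suc (?\<sigma> (Suc i))" by blast
  consider "Suc i \<le> g" | "i = g" | "g < i" by linarith
  then show False
  proof cases
    case 1 then show ?thesis using i av'[of i] by auto
  next
    case 2
    then have "\<tau> g = Suc (\<tau> (Suc (Suc g)))" using i remove_max_above[of g "Suc g"] by auto
    moreover have "\<tau> g < \<tau> (Suc g)"
      using permutes_in_atLeastAtMost[OF tp, of g] permutes_eq_iff[OF tp, of g "Suc g"] tg i 2 by auto
    ultimately show ?thesis using av231 i 2 unfolding avoids_231_def by fastforce
  next
    case 3
    then show ?thesis using i remove_max_above[of g i] remove_max_above[of g "Suc i"] av'[of "Suc i"] by auto
  qed
qed

lemma active_gap_remove_max:
  assumes tp: "\<tau> permutes {1..Suc N}" and av21: "avoids_21 (Suc N) \<tau>" and av231: "avoids_231 (Suc N) \<tau>"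
    and tg: "\<tau> (Suc g) = Suc N" and gN: "g \<le> N"
  shows "g \<in> active_gaps N (remove_max N g \<tau>)"
proof -
  have "safe_gap \<tau> g" using safe_gap_before_max[OF tp av231 tg] gN by simp
  then have "safe_gap (remove_max N g \<tau>) g" by (subst safe_gap_cong[of g]) auto
  moreover have "remove_max N g \<tau> (Suc g) \<noteq> N"
  proof (cases "Suc g \<le> N")
    case True
    then show ?thesis using av21 tg remove_max_above[of g "Suc g"] unfolding avoids_21_def by fastforce
  qed (simp add: remove_max_def)
  ultimately show ?thesis using gN by (simp add: active_gaps_def)
qed

definition safe_gaps :: "nat \<Rightarrow> (nat \<Rightarrow> nat) \<Rightarrow> nat set" where
  "safe_gaps N \<sigma> = {h \<in> {0..N}. safe_gap \<sigma> h}"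

definition max_gap :: "nat \<Rightarrow> (nat \<Rightarrow> nat) \<Rightarrow> nat" where
  "max_gap N \<sigma> = inv \<sigma> N - 1"

lemma max_gap_position:
  assumes p: "\<sigma> permutes {1..N}" and N: "N \<ge> 1"
  shows "\<sigma> (Suc (max_gap N \<sigma>)) = N" "Suc (max_gap N \<sigma>) \<le> N"
proof -
  have ip: "inv \<sigma> permutes {1..N}" using permutes_inv[OF p] .
  have r: "1 \<le> inv \<sigma> N" "inv \<sigma> N \<le> N" using permutes_in_atLeastAtMost[OF ip, of N] N by auto
  then have "Suc (max_gap N \<sigma>) = inv \<sigma> N" unfolding max_gap_def by simp
  then show "\<sigma> (Suc (max_gap N \<sigma>)) = N" "Suc (max_gap N \<sigma>) \<le> N" using permutes_inverses(1)[OF p] r by auto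
qed

lemma max_gap_eqI:
  assumes p: "\<sigma> permutes {1..N}" and "\<sigma> (Suc g) = N"
  shows "max_gap N \<sigma> = g"
  unfolding max_gap_def using permutes_inverses(2)[OF p, of "Suc g"] assms(2) by simp

lemma active_gaps_eq:
  assumes p: "\<sigma> permutes {1..N}" and m: "\<sigma> (Suc m) = N"
  shows "active_gaps N \<sigma> = safe_gaps N \<sigma> - {m}"
  unfolding active_gaps_def safe_gaps_def using m permutes_eq_iff[OF p] by auto

lemma finite_safe_gaps: "finite (safe_gaps N \<sigma>)" unfolding safe_gaps_def by auto
lemma finite_active_gaps: "finite (active_gaps N \<sigma>)" unfolding active_gaps_def by auto

lemma safe_gap_insert_max_at:
  assumes p: "\<sigma> permutes {1..N}" and N: "N \<ge> 1" and m: "\<sigma> (Suc m) = N"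
  shows "safe_gap (insert_max N g \<sigma>) (Suc g) \<longleftrightarrow> m < g"
proof -
  have "safe_gap (insert_max N g \<sigma>) (Suc g) \<longleftrightarrow> (\<exists>t. 1 \<le> t \<and> t < Suc g \<and> Suc (insert_max N g \<sigma> t) = Suc N)"
    unfolding safe_gap_def insert_max_at using N by simp
  also have "\<dots> \<longleftrightarrow> (\<exists>t. 1 \<le> t \<and> t \<le> g \<and> \<sigma> t = N)"
    by (auto simp: less_Suc_eq_le)
  also have "\<dots> \<longleftrightarrow> m < g"
  proof
    assume "\<exists>t. 1 \<le> t \<and> t \<le> g \<and> \<sigma> t = N"
    then obtain t where "t \<le> g" "\<sigma> t = N" by blast
    then show "m < g" using m permutes_eq_iff[OF p, of t "Suc m"] by simp
  qed (use m in \<open>auto intro!: exI[of _ "Suc m"]\<close>)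
  finally show ?thesis .
qed

lemma safe_gap_insert_max_above:
  assumes p: "\<sigma> permutes {1..N}" and h: "g < h" "h \<le> N"
  shows "safe_gap (insert_max N g \<sigma>) (Suc h) \<longleftrightarrow> safe_gap \<sigma> h"
proof -
  let ?\<tau> = "insert_max N g \<sigma>"
  have th: "?\<tau> (Suc h) = \<sigma> h" using insert_max_above[of g "Suc h"] h by simp
  have "(\<exists>t. 1 \<le> t \<and> t < Suc h \<and> Suc (?\<tau> t) = \<sigma> h) \<longleftrightarrow> (\<exists>t. 1 \<le> t \<and> t < h \<and> Suc (\<sigma> t) = \<sigma> h)"
  proof
    assume "\<exists>t. 1 \<le> t \<and> t < Suc h \<and> Suc (?\<tau> t) = \<sigma> h"
    then obtain t where t: "1 \<le> t" "t < Suc h" "Suc (?\<tau> t) = \<sigma> h" by blast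
    consider "t \<le> g" | "t = Suc g" | "Suc g < t" by linarith
    then show "\<exists>t. 1 \<le> t \<and> t < h \<and> Suc (\<sigma> t) = \<sigma> h"
    proof cases
      case 1 then show ?thesis using t h by (intro exI[of _ t]) auto
    next
      case 2 then show ?thesis using t h permutes_in_atLeastAtMost[OF p, of h] by auto
    next
      case 3 then show ?thesis using t h insert_max_above[of g t] by (intro exI[of _ "t - 1"]) auto
    qed
  next
    assume "\<exists>t. 1 \<le> t \<and> t < h \<and> Suc (\<sigma> t) = \<sigma> h"
    then obtain t where t: "1 \<le> t" "t < h" "Suc (\<sigma> t) = \<sigma> h" by blast
    show "\<exists>t. 1 \<le> t \<and> t < Suc h \<and> Suc (?\<tau> t) = \<sigma> h"
    proof (cases "t \<le> g")
      case True then show ?thesis using t by (intro exI[of _ t]) auto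
    next
      case False
      then show ?thesis using t h insert_max_above[of g "Suc t"] by (intro exI[of _ "Suc t"]) auto
    qed
  qed
  then show ?thesis unfolding safe_gap_def th using h by auto
qed

lemma safe_gaps_insert_max:
  assumes p: "\<sigma> permutes {1..N}" and N: "N \<ge> 1" and gN: "g \<le> N" and m: "\<sigma> (Suc m) = N"
  shows "safe_gaps (Suc N) (insert_max N g \<sigma>) =
    {h \<in> safe_gaps N \<sigma>. h \<le> g} \<union> (if m < g then {Suc g} else {}) \<union> Suc ` {h \<in> safe_gaps N \<sigma>. g < h}"
proof (rule set_eqI)
  fix h
  consider "h \<le> g" | "h = Suc g" | "Suc g < h" "h \<le> Suc N" | "Suc N < h" by linarith
  then show "h \<in> safe_gaps (Suc N) (insert_max N g \<sigma>) \<longleftrightarrow>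
    h \<in> {h \<in> safe_gaps N \<sigma>. h \<le> g} \<union> (if m < g then {Suc g} else {}) \<union> Suc ` {h \<in> safe_gaps N \<sigma>. g < h}"
  proof cases
    case 1
    then have "safe_gap (insert_max N g \<sigma>) h \<longleftrightarrow> safe_gap \<sigma> h" by (intro safe_gap_cong) auto
    then show ?thesis using 1 gN by (auto simp: safe_gaps_def)
  next
    case 2
    then show ?thesis using safe_gap_insert_max_at[OF p N m] gN by (auto simp: safe_gaps_def)
  next
    case 3
    then obtain h' where "h = Suc h'" "g < h'" "h' \<le> N" by (cases h) auto
    then show ?thesis using safe_gap_insert_max_above[OF p, of g h'] gN by (auto simp: safe_gaps_def)
  qed (use gN in \<open>auto simp: safe_gaps_def\<close>)
qed

definition label_231_21 :: "nat \<times> (nat \<Rightarrow> nat) \<Rightarrow> nat \<times> nat" where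
  "label_231_21 x = (case x of (N, \<sigma>) \<Rightarrow> (card (active_gaps N \<sigma>), rank_in (active_gaps N \<sigma>) (max_gap N \<sigma>)))"

lemma active_gaps_insert_max:
  assumes p: "\<sigma> permutes {1..N}" and N: "N \<ge> 1" and gN: "g \<le> N" and m: "\<sigma> (Suc m) = N"
  shows "active_gaps (Suc N) (insert_max N g \<sigma>) =
    {h \<in> safe_gaps N \<sigma>. h < g} \<union> (if m < g then {Suc g} else {}) \<union> Suc ` {h \<in> safe_gaps N \<sigma>. g < h}"
  unfolding active_gaps_eq[OF insert_max_permutes[OF p gN] insert_max_at] safe_gaps_insert_max[OF p N gN m]
  by auto

lemma label_231_21_insert_max:
  assumes p: "\<sigma> permutes {1..N}" and av: "avoids_231 N \<sigma>" and N: "N \<ge> 1" and g: "g \<in> active_gaps N \<sigma>"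
  shows "label_231_21 (Suc N, insert_max N g \<sigma>) =
    (if rank_in (active_gaps N \<sigma>) g \<le> rank_in (active_gaps N \<sigma>) (max_gap N \<sigma>) then (card (active_gaps N \<sigma>), rank_in (active_gaps N \<sigma>) g - 1)
     else (Suc (card (active_gaps N \<sigma>)), rank_in (active_gaps N \<sigma>) g))"
proof -
  let ?m = "max_gap N \<sigma>" and ?\<tau> = "insert_max N g \<sigma>" and ?A = "active_gaps N \<sigma>" and ?L = "safe_gaps N \<sigma>"
  have m: "\<sigma> (Suc ?m) = N" "Suc ?m \<le> N" using max_gap_position[OF p N] by auto
  have mL: "?m \<in> ?L" using safe_gap_before_max[OF p av m] m by (simp add: safe_gaps_def)
  have A: "?A = ?L - {?m}" using active_gaps_eq[OF p m(1)] .
  have gL: "g \<in> ?L" "g \<noteq> ?m" "g \<le> N" using g A by (auto simp: safe_gaps_def)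
  have tp: "?\<tau> permutes {1..Suc N}" using insert_max_permutes[OF p gL(3)] .
  have mt: "max_gap (Suc N) ?\<tau> = g" using max_gap_eqI[OF tp insert_max_at] .
  define Lo where "Lo = {h \<in> ?L. h < g}"
  define Hi where "Hi = {h \<in> ?L. g < h}"
  define B where "B = (if ?m < g then {Suc g} else ({} :: nat set))"
  have fLo: "finite Lo" and fHi: "finite Hi" unfolding Lo_def Hi_def using finite_safe_gaps by auto
  have At: "active_gaps (Suc N) ?\<tau> = Lo \<union> B \<union> Suc ` Hi"
    unfolding active_gaps_insert_max[OF p N gL(3) m(1)] Lo_def Hi_def B_def ..
  have cAt: "card (active_gaps (Suc N) ?\<tau>) = card Lo + card B + card Hi"
  proof -
    have "card (Lo \<union> B \<union> Suc ` Hi) = card (Lo \<union> B) + card (Suc ` Hi)"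
      by (rule card_Un_disjoint) (use fLo fHi in \<open>auto simp: B_def Lo_def Hi_def\<close>)
    also have "card (Lo \<union> B) = card Lo + card B"
      by (rule card_Un_disjoint) (auto simp: fLo B_def Lo_def)
    also have "card (Suc ` Hi) = card Hi" by (simp add: card_image)
    finally show ?thesis using At by simp
  qed
  have Ldec: "?L = insert g (Lo \<union> Hi)" using gL unfolding Lo_def Hi_def by auto
  have cL: "card ?L = Suc (card Lo + card Hi)"
  proof -
    have "card (Lo \<union> Hi) = card Lo + card Hi"
      by (rule card_Un_disjoint) (use fLo fHi in \<open>auto simp: Lo_def Hi_def\<close>)
    moreover have "g \<notin> Lo \<union> Hi" by (auto simp: Lo_def Hi_def)
    ultimately show ?thesis unfolding Ldec using fLo fHi by simp
  qed
  have cA: "card ?A = card Lo + card Hi"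
    unfolding A using mL finite_safe_gaps cL by (simp add: card_Diff_singleton)
  have rt: "rank_in (active_gaps (Suc N) ?\<tau>) g = card Lo"
  proof -
    have "{a \<in> active_gaps (Suc N) ?\<tau>. a \<le> g} = Lo" unfolding At B_def Lo_def Hi_def by auto
    then show ?thesis by (simp add: rank_in_def)
  qed
  have rs: "rank_in ?A g = Suc (card (Lo - {?m}))"
  proof -
    have "{a \<in> ?A. a \<le> g} = insert g (Lo - {?m})" unfolding A Lo_def using gL by auto
    then show ?thesis using fLo by (simp add: rank_in_def Lo_def)
  qed
  have iff: "rank_in ?A g \<le> rank_in ?A ?m \<longleftrightarrow> g \<le> ?m" using rank_in_le_iff[OF finite_active_gaps g] .
  show ?thesis
  proof (cases "?m < g")
    case True
    then have "?m \<in> Lo" using mL by (simp add: Lo_def)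
    then have "card (Lo - {?m}) = card Lo - 1" "card Lo \<ge> 1" using fLo
      by (auto simp: card_Diff_singleton Suc_le_eq card_gt_0_iff)
    then show ?thesis unfolding label_231_21_def using True iff cAt cA rt rs mt by (auto simp: B_def)
  next
    case False
    then have "?m \<notin> Lo" by (simp add: Lo_def)
    then have "Lo - {?m} = Lo" by auto
    then show ?thesis unfolding label_231_21_def using False iff cAt cA rt rs mt gL by (auto simp: B_def)
  qed
qed

definition level_231_21 :: "nat \<Rightarrow> (nat \<times> (nat \<Rightarrow> nat)) set" where
  "level_231_21 n = (\<lambda>\<sigma>. (Suc n, \<sigma>)) `
     {\<sigma>. \<sigma> permutes {1..Suc n} \<and> avoids_231 (Suc n) \<sigma> \<and> avoids_21 (Suc n) \<sigma>}"

definition children_231_21 :: "nat \<times> (nat \<Rightarrow> nat) \<Rightarrow> (nat \<times> (nat \<Rightarrow> nat)) set" where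
  "children_231_21 x = (case x of (N, \<sigma>) \<Rightarrow> (\<lambda>g. (Suc N, insert_max N g \<sigma>)) ` active_gaps N \<sigma>)"

definition parent_231_21 :: "nat \<times> (nat \<Rightarrow> nat) \<Rightarrow> nat \<times> (nat \<Rightarrow> nat)" where
  "parent_231_21 x = (case x of (N, \<tau>) \<Rightarrow> (N - 1, remove_max (N - 1) (max_gap N \<tau>) \<tau>))"

lemma level_231_21_Suc: "level_231_21 (Suc n) = (\<Union>x\<in>level_231_21 n. children_231_21 x)"
proof (rule set_eqI, rule iffI)
  fix y assume "y \<in> level_231_21 (Suc n)"
  then obtain \<tau> where y: "y = (Suc (Suc n), \<tau>)" "\<tau> permutes {1..Suc (Suc n)}"
    "avoids_231 (Suc (Suc n)) \<tau>" "avoids_21 (Suc (Suc n)) \<tau>"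
    unfolding level_231_21_def by auto
  define g where "g = max_gap (Suc (Suc n)) \<tau>"
  have g: "\<tau> (Suc g) = Suc (Suc n)" "g \<le> Suc n" using max_gap_position[OF y(2)] unfolding g_def by auto
  show "y \<in> (\<Union>x\<in>level_231_21 n. children_231_21 x)"
    unfolding level_231_21_def children_231_21_def
    using y remove_max_permutes[OF y(2) g(2,1)] avoids_231_remove_max[OF y(2,3) g]
      avoids_21_remove_max[OF y(2,4,3) g] active_gap_remove_max[OF y(2,4,3) g]
      insert_max_remove_max[OF y(2) g(2,1)]
    by (intro UN_I[of "(Suc n, remove_max (Suc n) g \<tau>)"]) (auto intro!: image_eqI[of _ _ g])
next
  fix y assume "y \<in> (\<Union>x\<in>level_231_21 n. children_231_21 x)"
  then obtain \<sigma> g where h: "\<sigma> permutes {1..Suc n}" "avoids_231 (Suc n) \<sigma>" "avoids_21 (Suc n) \<sigma>"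
    "g \<in> active_gaps (Suc n) \<sigma>" "y = (Suc (Suc n), insert_max (Suc n) g \<sigma>)"
    unfolding level_231_21_def children_231_21_def by auto
  then have g: "g \<le> Suc n" "safe_gap \<sigma> g" "\<sigma> (Suc g) \<noteq> Suc n" by (auto simp: active_gaps_def)
  show "y \<in> level_231_21 (Suc n)"
    unfolding level_231_21_def
    using h(5) insert_max_permutes[OF h(1) g(1)] avoids_231_insert_max[OF h(1,2) g(1,2)]
      avoids_21_insert_max[OF h(1,3) g(1,3)]
    by auto
qed

lemma parent_children_231_21:
  assumes "x \<in> level_231_21 n" and "c \<in> children_231_21 x"
  shows "parent_231_21 c = x"
proof -
  obtain \<sigma> g where x: "x = (Suc n, \<sigma>)" "\<sigma> permutes {1..Suc n}"
    and c: "c = (Suc (Suc n), insert_max (Suc n) g \<sigma>)" "g \<in> active_gaps (Suc n) \<sigma>"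
    using assms unfolding level_231_21_def children_231_21_def by auto
  have g: "g \<le> Suc n" using c(2) by (simp add: active_gaps_def)
  have "max_gap (Suc (Suc n)) (insert_max (Suc n) g \<sigma>) = g"
    using max_gap_eqI[OF insert_max_permutes[OF x(2) g] insert_max_at] .
  then show ?thesis
    unfolding parent_231_21_def x c using remove_max_insert_max[OF x(2) g] by simp
qed

lemma finite_children_231_21: "finite (children_231_21 x)"
  unfolding children_231_21_def by (simp add: finite_active_gaps split: prod.split)

lemma sum_children_231_21:
  assumes "x \<in> level_231_21 n"
  shows "(\<Sum>c\<in>children_231_21 x. tree_count m (label_231_21 c)) = tree_count (Suc m) (label_231_21 x)"
proof -
  obtain \<sigma> where x: "x = (Suc n, \<sigma>)" "\<sigma> permutes {1..Suc n}" "avoids_231 (Suc n) \<sigma>"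
    using assms unfolding level_231_21_def by auto
  let ?A = "active_gaps (Suc n) \<sigma>" and ?child = "\<lambda>g. (Suc (Suc n), insert_max (Suc n) g \<sigma>)"
  have inj: "inj_on ?child ?A"
  proof (rule inj_onI)
    fix a b assume ab: "a \<in> ?A" "b \<in> ?A" "?child a = ?child b"
    have "a \<le> Suc n" using ab(1) by (simp add: active_gaps_def)
    then have "insert_max (Suc n) a \<sigma> permutes {1..Suc (Suc n)}" by (rule insert_max_permutes[OF x(2)])
    moreover have "insert_max (Suc n) a \<sigma> = insert_max (Suc n) b \<sigma>" using ab(3) by simp
    then have "insert_max (Suc n) a \<sigma> (Suc a) = insert_max (Suc n) a \<sigma> (Suc b)"
      by (metis insert_max_at)
    ultimately show "a = b" using permutes_eq_iff by blast
  qed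
  have "(\<Sum>c\<in>?child ` ?A. tree_count m (label_231_21 c)) =
      tree_count (Suc m) (card ?A, rank_in ?A (max_gap (Suc n) \<sigma>))"
  proof (rule sum_tree_count_ranked_children[OF bij_betw_rank_in[OF finite_active_gaps] _ inj])
    show "rank_in ?A (max_gap (Suc n) \<sigma>) \<le> card ?A" by (simp add: rank_in_le_card finite_active_gaps)
  qed (rule label_231_21_insert_max[OF x(2,3)], simp_all)
  then show ?thesis unfolding children_231_21_def x label_231_21_def by simp
qed

lemma permutes_2_avoids_21_eq_id:
  assumes p: "\<sigma> permutes {1..2::nat}" and av: "avoids_21 2 \<sigma>"
  shows "\<sigma> = id"
proof -
  have r: "\<sigma> 1 \<in> {1,2}" "\<sigma> 2 \<in> {1,2}" "\<sigma> 1 \<noteq> \<sigma> 2"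
    using permutes_in_atLeastAtMost[OF p, of 1] permutes_in_atLeastAtMost[OF p, of 2]
      permutes_eq_iff[OF p, of 1 2] by auto
  have "\<not> (\<sigma> 1 = Suc (\<sigma> (Suc 1)))" using av unfolding avoids_21_def by fastforce
  then have "\<sigma> 1 = 1" "\<sigma> 2 = 2" using r by (auto simp: numeral_2_eq_2)
  moreover have "\<sigma> t = t" if "t \<noteq> 1" "t \<noteq> 2" for t
    using that permutes_outside_atLeastAtMost[OF p, of t] by linarith
  ultimately show ?thesis by (metis id_apply ext)
qed

lemma card_avoids_231_21:
  "card {\<sigma>. \<sigma> permutes {1..Suc (Suc j)} \<and> avoids_231 (Suc (Suc j)) \<sigma> \<and> avoids_21 (Suc (Suc j)) \<sigma>}
     = tree_count j (2, 1)"
proof -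
  have "avoids_231 2 id" "avoids_21 2 id" by (auto simp: avoids_231_def avoids_21_def)
  then have "{\<sigma>. \<sigma> permutes {1..2::nat} \<and> avoids_231 2 \<sigma> \<and> avoids_21 2 \<sigma>} = {id}"
    using permutes_2_avoids_21_eq_id permutes_id by blast
  then have root: "level_231_21 1 = {(2, id)}" unfolding level_231_21_def by (simp add: numeral_2_eq_2)
  have "active_gaps 2 id = {0, 2}" unfolding active_gaps_def safe_gap_def by (auto simp: numeral_2_eq_2)
  moreover have "max_gap 2 id = 1" unfolding max_gap_def by simp
  moreover have "{w\<in>{0, 2::nat}. w \<le> 1} = {0}" by auto
  ultimately have label_root: "label_231_21 (2, id) = (2, 1)" unfolding label_231_21_def rank_in_def by simp
  have "card (level_231_21 (Suc j)) = tree_count j (2, 1)"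
    by (rule card_level_generating_tree[where level = level_231_21 and children = children_231_21
          and parent = parent_231_21 and label = label_231_21, OF _ _ _ _ root label_root])
      (simp_all add: level_231_21_Suc parent_children_231_21 sum_children_231_21 finite_children_231_21)
  moreover have "card (level_231_21 (Suc j)) =
      card {\<sigma>. \<sigma> permutes {1..Suc (Suc j)} \<and> avoids_231 (Suc (Suc j)) \<sigma> \<and> avoids_21 (Suc (Suc j)) \<sigma>}"
    unfolding level_231_21_def by (rule card_image) (simp add: inj_on_def)
  ultimately show ?thesis by simp
qed

section \<open>Upper triangular binary matrices\<close>

text \<open>A square upper triangular binary matrix of size m without zero rows or columns,
  represented by the set of positions of its ones.\<close>
definition ut_support :: "nat \<Rightarrow> (nat \<times> nat) set \<Rightarrow> bool" where
  "ut_support m E \<longleftrightarrow> E \<subseteq> {(i, j). 1 \<le> i \<and> i \<le> j \<and> j \<le> m}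
     \<and> (\<forall>i\<in>{1..m}. \<exists>j. (i, j) \<in> E) \<and> (\<forall>j\<in>{1..m}. \<exists>i. (i, j) \<in> E)"

definition top_row :: "(nat \<times> nat) set \<Rightarrow> nat \<Rightarrow> nat" where
  "top_row E m = (LEAST i. (i, m) \<in> E)"

definition raise :: "nat \<Rightarrow> nat \<Rightarrow> nat" where "raise y x = (if y < x then Suc x else x)"
definition lower :: "nat \<Rightarrow> nat \<Rightarrow> nat" where "lower t x = (if t < x then x - 1 else x)"

definition split_col :: "nat \<Rightarrow> nat \<Rightarrow> nat \<times> nat \<Rightarrow> nat \<times> nat" where
  "split_col y m x = (case x of (i, j) \<Rightarrow> if j = m then (if i \<le> y then (i, Suc y) else (Suc i, Suc m)) else (raise y i, raise y j))"

definition merge_col :: "nat \<Rightarrow> nat \<Rightarrow> nat \<times> nat \<Rightarrow> nat \<times> nat" where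
  "merge_col t M x = (case x of (i, j) \<Rightarrow> if j = t then (i, M - 1) else if j = M then (i - 1, M - 1) else (lower t i, lower t j))"

text \<open>The m children of a matrix: for q above the topmost one of the last column, add a one
  at (q, m); for q from that row to \<open>m - 1\<close>, insert a new row and column \<open>q + 1\<close>, moving the ones of
  the last column in rows \<open>\<le> q\<close> to the new column and adding a one at \<open>(q + 1, m + 1)\<close>; for
  \<open>q = m\<close>, add an isolated one at \<open>(m + 1, m + 1)\<close>.\<close>
definition matrix_child :: "nat \<Rightarrow> (nat \<times> nat) set \<Rightarrow> nat \<Rightarrow> nat \<times> (nat \<times> nat) set" where
  "matrix_child m E q = (if q < top_row E m then (m, insert (q, m) E)
     else if q < m then (Suc m, insert (Suc q, Suc m) (split_col q m ` E))
     else (Suc m, insert (Suc m, Suc m) E))"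

definition matrix_parent :: "nat \<times> (nat \<times> nat) set \<Rightarrow> nat \<times> (nat \<times> nat) set" where
  "matrix_parent x = (case x of (M, E) \<Rightarrow>
     (if top_row E M = M then (M - 1, E - {(M, M)})
      else if (\<forall>j. (top_row E M, j) \<in> E \<longrightarrow> j = M) then (M - 1, merge_col (top_row E M) M ` (E - {(top_row E M, M)}))
      else (M, E - {(top_row E M, M)})))"

definition label_matrix :: "nat \<times> (nat \<times> nat) set \<Rightarrow> nat \<times> nat" where
  "label_matrix x = (case x of (m, E) \<Rightarrow> (m, top_row E m - 1))"

lemma finite_ut_support: "ut_support m E \<Longrightarrow> finite E"
  unfolding ut_support_def by (rule finite_subset[of _ "{1..m} \<times> {1..m}"]) auto

lemma ut_support_bounds: "ut_support m E \<Longrightarrow> (i, j) \<in> E \<Longrightarrow> 1 \<le> i \<and> i \<le> j \<and> j \<le> m"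
  unfolding ut_support_def by auto

lemma top_row_props:
  assumes v: "ut_support m E" and m: "m \<ge> 1"
  shows "(top_row E m, m) \<in> E" "1 \<le> top_row E m" "top_row E m \<le> m" "\<And>i. (i, m) \<in> E \<Longrightarrow> top_row E m \<le> i"
proof -
  have "m \<in> {1..m}" using m by simp
  then obtain i where "(i, m) \<in> E" using v unfolding ut_support_def by blast
  then show t: "(top_row E m, m) \<in> E" unfolding top_row_def by (rule LeastI)
  show "1 \<le> top_row E m" "top_row E m \<le> m" using ut_support_bounds[OF v t] by auto
  show "\<And>i. (i, m) \<in> E \<Longrightarrow> top_row E m \<le> i" unfolding top_row_def by (rule Least_le)
qed

lemma top_row_eqI:
  assumes "(t, m) \<in> E" "\<And>i. (i, m) \<in> E \<Longrightarrow> t \<le> i"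
  shows "top_row E m = t"
  unfolding top_row_def using assms by (intro Least_equality) auto

lemma ut_support_last_diag: "ut_support m E \<Longrightarrow> m \<ge> 1 \<Longrightarrow> (m, m) \<in> E"
proof -
  assume v: "ut_support m E" and m: "m \<ge> 1"
  have "m \<in> {1..m}" using m by simp
  then obtain j where j: "(m, j) \<in> E" using v unfolding ut_support_def by blast
  then have "j = m" using ut_support_bounds[OF v j] by simp
  then show ?thesis using j by simp
qed

lemma ut_support_insert_above_top:
  assumes v: "ut_support m E" and m: "m \<ge> 1" and r: "1 \<le> r" "r < top_row E m"
  shows "ut_support m (insert (r, m) E)" "card (insert (r, m) E) = Suc (card E)"
    "top_row (insert (r, m) E) m = r"
proof -
  have tp: "top_row E m \<le> m" "\<And>i. (i, m) \<in> E \<Longrightarrow> top_row E m \<le> i" using top_row_props[OF v m] by auto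
  have nin: "(r, m) \<notin> E" using tp(2) r by force
  show "ut_support m (insert (r, m) E)" using v r tp unfolding ut_support_def by auto
  show "card (insert (r, m) E) = Suc (card E)" using nin finite_ut_support[OF v] by simp
  show "top_row (insert (r, m) E) m = r" using tp(2) r by (intro top_row_eqI) force+
qed

lemma ut_support_insert_diag:
  assumes v: "ut_support m E" and m: "m \<ge> 1"
  shows "ut_support (Suc m) (insert (Suc m, Suc m) E)" "card (insert (Suc m, Suc m) E) = Suc (card E)"
    "top_row (insert (Suc m, Suc m) E) (Suc m) = Suc m"
proof -
  have nin: "(Suc m, Suc m) \<notin> E" using ut_support_bounds[OF v] by fastforce
  show "ut_support (Suc m) (insert (Suc m, Suc m) E)" using v unfolding ut_support_def by (auto simp: le_Suc_eq)
  show "card (insert (Suc m, Suc m) E) = Suc (card E)" using nin finite_ut_support[OF v] by simp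
  show "top_row (insert (Suc m, Suc m) E) (Suc m) = Suc m" using ut_support_bounds[OF v] by (intro top_row_eqI) force+
qed

lemma split_col_image:
  assumes v: "ut_support m E" and y: "top_row E m \<le> y" "y < m"
  shows "inj_on (split_col y m) E" "(Suc y, Suc m) \<notin> split_col y m ` E"
    "card (insert (Suc y, Suc m) (split_col y m ` E)) = Suc (card E)"
    "top_row (insert (Suc y, Suc m) (split_col y m ` E)) (Suc m) = Suc y"
proof -
  have sub: "\<And>i j. (i, j) \<in> E \<Longrightarrow> 1 \<le> i \<and> i \<le> j \<and> j \<le> m" using ut_support_bounds[OF v] by blast
  show inj: "inj_on (split_col y m) E"
  proof (rule inj_onI)
    fix a b assume ab: "a \<in> E" "b \<in> E" "split_col y m a = split_col y m b"
    obtain i j where a: "a = (i, j)" by (cases a)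
    obtain i' j' where b: "b = (i', j')" by (cases b)
    show "a = b" using ab sub[of i j] sub[of i' j'] unfolding a b
      by (auto simp: split_col_def raise_def split: if_splits)
  qed
  show nin: "(Suc y, Suc m) \<notin> split_col y m ` E"
  proof
    assume "(Suc y, Suc m) \<in> split_col y m ` E"
    then obtain i j where "(i, j) \<in> E" "split_col y m (i, j) = (Suc y, Suc m)" by auto
    then show False using sub[of i j] y by (auto simp: split_col_def raise_def split: if_splits)
  qed
  show "card (insert (Suc y, Suc m) (split_col y m ` E)) = Suc (card E)"
    using nin inj finite_ut_support[OF v] by (simp add: card_image)
  let ?E = "insert (Suc y, Suc m) (split_col y m ` E)"
  show "top_row ?E (Suc m) = Suc y"
  proof (rule top_row_eqI)
    show "(Suc y, Suc m) \<in> ?E" by simp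
    fix i assume "(i, Suc m) \<in> ?E"
    then show "Suc y \<le> i"
    proof
      assume "(i, Suc m) \<in> split_col y m ` E"
      then obtain a b where "(a, b) \<in> E" "split_col y m (a, b) = (i, Suc m)" by auto
      then show ?thesis using sub[of a b] y by (auto simp: split_col_def raise_def split: if_splits)
    qed simp
  qed
qed

lemma ut_support_split_col:
  assumes v: "ut_support m E" and m: "m \<ge> 1" and y: "top_row E m \<le> y" "y < m"
  shows "ut_support (Suc m) (insert (Suc y, Suc m) (split_col y m ` E))"
proof -
  have sub: "\<And>i j. (i, j) \<in> E \<Longrightarrow> 1 \<le> i \<and> i \<le> j \<and> j \<le> m" using ut_support_bounds[OF v] by blast
  have tp: "(top_row E m, m) \<in> E" using top_row_props[OF v m] by auto
  let ?E = "insert (Suc y, Suc m) (split_col y m ` E)"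
  have s1: "?E \<subseteq> {(i, j). 1 \<le> i \<and> i \<le> j \<and> j \<le> Suc m}"
  proof
    fix x assume "x \<in> ?E"
    then show "x \<in> {(i, j). 1 \<le> i \<and> i \<le> j \<and> j \<le> Suc m}"
    proof
      assume "x = (Suc y, Suc m)" then show ?thesis using y by auto
    next
      assume "x \<in> split_col y m ` E"
      then obtain i j where "(i, j) \<in> E" "x = split_col y m (i, j)" by auto
      then show ?thesis using sub[of i j] y by (auto simp: split_col_def raise_def)
    qed
  qed
  have s2: "\<forall>i\<in>{1..Suc m}. \<exists>j. (i, j) \<in> ?E"
  proof
    fix i assume i: "i \<in> {1..Suc m}"
    consider "i = Suc y" | "i \<le> y" | "Suc y < i" by linarith
    then show "\<exists>j. (i, j) \<in> ?E"
    proof cases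
      case 1 then show ?thesis by auto
    next
      case 2
      then have "i \<in> {1..m}" using i y by auto
      then obtain j where j: "(i, j) \<in> E" using v unfolding ut_support_def by blast
      have "fst (split_col y m (i, j)) = i" using 2 by (auto simp: split_col_def raise_def)
      then show ?thesis using j by (metis imageI insertI2 prod.collapse)
    next
      case 3
      then have "i - 1 \<in> {1..m}" using i y by auto
      then obtain j where j: "(i - 1, j) \<in> E" using v unfolding ut_support_def by blast
      have "fst (split_col y m (i - 1, j)) = i" using 3 by (auto simp: split_col_def raise_def)
      then show ?thesis using j by (metis imageI insertI2 prod.collapse)
    qed
  qed
  have s3: "\<forall>j\<in>{1..Suc m}. \<exists>i. (i, j) \<in> ?E"
  proof
    fix j assume j: "j \<in> {1..Suc m}"
    consider "j = Suc m" | "j = Suc y" | "j \<le> y" | "Suc y < j" "j \<le> m" using j by (auto simp: not_less_eq_eq) linarith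
    then show "\<exists>i. (i, j) \<in> ?E"
    proof cases
      case 1 then show ?thesis by auto
    next
      case 2
      have "snd (split_col y m (top_row E m, m)) = j" using 2 y by (auto simp: split_col_def)
      then show ?thesis using tp by (metis imageI insertI2 prod.collapse)
    next
      case 3
      then have "j \<in> {1..m}" using j y by auto
      then obtain i where i: "(i, j) \<in> E" using v unfolding ut_support_def by blast
      have "snd (split_col y m (i, j)) = j" using 3 y by (auto simp: split_col_def raise_def)
      then show ?thesis using i by (metis imageI insertI2 prod.collapse)
    next
      case 4
      then have "j - 1 \<in> {1..m}" using j y by auto
      then obtain i where i: "(i, j - 1) \<in> E" using v unfolding ut_support_def by blast
      have "snd (split_col y m (i, j - 1)) = j" using 4 y by (auto simp: split_col_def raise_def)
      then show ?thesis using i by (metis imageI insertI2 prod.collapse)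
    qed
  qed
  show ?thesis using s1 s2 s3 by (simp add: ut_support_def)
qed

lemma merge_col_split_col:
  assumes v: "ut_support m E" and "y < m" and x: "x \<in> E"
  shows "merge_col (Suc y) (Suc m) (split_col y m x) = x"
proof -
  obtain i j where xe: "x = (i, j)" by (cases x)
  show ?thesis using ut_support_bounds[OF v, of i j] x assms(2) unfolding xe
    by (auto simp: split_col_def merge_col_def raise_def lower_def)
qed

lemma matrix_parent_child:
  assumes v: "ut_support m E" and m: "m \<ge> 1" and q: "q \<in> {1..m}"
  shows "matrix_parent (matrix_child m E q) = (m, E)"
proof -
  let ?t = "top_row E m"
  have tp: "(?t, m) \<in> E" "1 \<le> ?t" "?t \<le> m" "\<And>i. (i, m) \<in> E \<Longrightarrow> ?t \<le> i" using top_row_props[OF v m] by auto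
  have sub: "\<And>i j. (i, j) \<in> E \<Longrightarrow> 1 \<le> i \<and> i \<le> j \<and> j \<le> m" using ut_support_bounds[OF v] by blast
  consider "q < ?t" | "?t \<le> q" "q < m" | "q = m" using q by fastforce
  then show ?thesis
  proof cases
    case 1
    note ks = ut_support_insert_above_top[OF v m _ 1]
    have k: "matrix_child m E q = (m, insert (q, m) E)" using 1 by (simp add: matrix_child_def)
    have nin: "(q, m) \<notin> E" using tp(4) 1 by force
    have qm: "q \<noteq> m" using 1 tp by simp
    have "q \<in> {1..m}" using q by simp
    then obtain j where j: "(q, j) \<in> E" using v unfolding ut_support_def by blast
    then have "j \<noteq> m" using nin by auto
    then have "\<not> (\<forall>j. (q, j) \<in> insert (q, m) E \<longrightarrow> j = m)" using j by auto
    then show ?thesis unfolding k matrix_parent_def using ks q qm nin by auto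
  next
    case 2
    note ks = split_col_image[OF v 2]
    let ?E = "insert (Suc q, Suc m) (split_col q m ` E)"
    have k: "matrix_child m E q = (Suc m, ?E)" using 2 by (simp add: matrix_child_def)
    have row: "\<forall>j. (Suc q, j) \<in> ?E \<longrightarrow> j = Suc m"
    proof (intro allI impI)
      fix j assume "(Suc q, j) \<in> ?E"
      then show "j = Suc m"
      proof
        assume "(Suc q, j) \<in> split_col q m ` E"
        then obtain a b where "(a, b) \<in> E" "split_col q m (a, b) = (Suc q, j)" by auto
        then show ?thesis using sub[of a b] by (auto simp: split_col_def raise_def split: if_splits)
      qed simp
    qed
    have "merge_col (Suc q) (Suc m) ` (?E - {(Suc q, Suc m)}) = E"
    proof -
      have "?E - {(Suc q, Suc m)} = split_col q m ` E" using ks(2) by auto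
      then show ?thesis using merge_col_split_col[OF v 2(2)] by (simp add: image_image)
    qed
    then show ?thesis unfolding k matrix_parent_def using ks(4) row 2 by auto
  next
    case 3
    note ks = ut_support_insert_diag[OF v m]
    have k: "matrix_child m E q = (Suc m, insert (Suc m, Suc m) E)" using 3 tp by (simp add: matrix_child_def)
    have nin: "(Suc m, Suc m) \<notin> E" using sub by fastforce
    show ?thesis unfolding k matrix_parent_def using ks(3) nin by auto
  qed
qed

lemma card_ut_support_le_1: "ut_support M E \<Longrightarrow> M \<le> 1 \<Longrightarrow> card E \<le> 1"
proof -
  assume v: "ut_support M E" and M: "M \<le> 1"
  have "E \<subseteq> {(1, 1)}" using ut_support_bounds[OF v] M by fastforce
  then have "card E \<le> card {(1::nat, 1::nat)}" by (intro card_mono) auto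
  then show ?thesis by simp
qed

lemma split_col_merge_col:
  assumes "1 \<le> i" "i \<le> j" "j \<le> Suc m" "i \<noteq> Suc y" "j = Suc m \<Longrightarrow> Suc y < i" "y < m"
  shows "split_col y m (merge_col (Suc y) (Suc m) (i, j)) = (i, j)"
proof -
  consider "j = Suc y" | "j = Suc m" | "j \<noteq> Suc y" "j \<noteq> Suc m" by blast
  then show ?thesis
  proof cases
    case 1
    then have "i \<le> y" using assms by auto
    then show ?thesis using 1 assms(6) by (simp add: split_col_def merge_col_def)
  next
    case 2
    then have "Suc y < i" using assms by auto
    then show ?thesis using 2 assms(6) by (auto simp: split_col_def merge_col_def)
  next
    case 3
    have jm: "j \<le> m" using 3 assms by auto
    have d: "lower (Suc y) j \<noteq> m" using 3 jm assms(6) by (auto simp: lower_def)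
    have u: "\<And>x. x \<noteq> Suc y \<Longrightarrow> raise y (lower (Suc y) x) = x" by (auto simp: raise_def lower_def)
    have "i \<noteq> Suc y" using assms by simp
    then show ?thesis using 3 d u[of i] u[of j] by (simp add: split_col_def merge_col_def)
  qed
qed

lemma merge_col_bounds:
  assumes "1 \<le> i" "i \<le> j" "j \<le> Suc m" "i \<noteq> Suc y" "j = Suc m \<Longrightarrow> Suc y < i" "y < m"
  shows "1 \<le> fst (merge_col (Suc y) (Suc m) (i, j)) \<and> fst (merge_col (Suc y) (Suc m) (i, j)) \<le> snd (merge_col (Suc y) (Suc m) (i, j))
     \<and> snd (merge_col (Suc y) (Suc m) (i, j)) \<le> m"
proof -
  consider "j = Suc y" | "j = Suc m" | "j \<noteq> Suc y" "j \<noteq> Suc m" by blast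
  then show ?thesis
  proof cases
    case 1
    then show ?thesis using assms by (simp add: merge_col_def)
  next
    case 2
    then show ?thesis using assms by (auto simp: merge_col_def)
  next
    case 3
    have jm: "j \<le> m" using 3 assms by auto
    then show ?thesis using 3 assms by (auto simp: merge_col_def lower_def)
  qed
qed

lemma matrix_child_preimage_diag:
  assumes v: "ut_support M E" and M2: "M \<ge> 2" and tM: "top_row E M = M"
  shows "\<exists>m' E' q. ut_support m' E' \<and> Suc (card E') = card E \<and> q \<in> {1..m'} \<and> matrix_child m' E' q = (M, E)"
proof -
  have M1: "M \<ge> 1" using M2 by simp
  let ?t = "top_row E M"
  have tp: "(?t, M) \<in> E" "1 \<le> ?t" "?t \<le> M" "\<And>i. (i, M) \<in> E \<Longrightarrow> ?t \<le> i"
    using top_row_props[OF v M1] by auto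
  have sub: "\<And>i j. (i, j) \<in> E \<Longrightarrow> 1 \<le> i \<and> i \<le> j \<and> j \<le> M" using ut_support_bounds[OF v] by blast
  have rows: "\<And>i. 1 \<le> i \<Longrightarrow> i \<le> M \<Longrightarrow> \<exists>j. (i, j) \<in> E" using v unfolding ut_support_def by auto
  have cols: "\<And>j. 1 \<le> j \<Longrightarrow> j \<le> M \<Longrightarrow> \<exists>i. (i, j) \<in> E" using v unfolding ut_support_def by auto
  have fin: "finite E" using finite_ut_support[OF v] .
  have diag: "(M, M) \<in> E" using ut_support_last_diag[OF v M1] .
  let ?m = "M - 1" and ?E = "E - {(M, M)}"
  have s: "\<And>i j. (i, j) \<in> ?E \<Longrightarrow> 1 \<le> i \<and> i \<le> j \<and> j \<le> ?m"
  proof -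
    fix i j assume ij: "(i, j) \<in> ?E"
    then have "j \<noteq> M" using tp(4)[of i] tM sub[of i j] by fastforce
    then show "1 \<le> i \<and> i \<le> j \<and> j \<le> ?m" using sub[of i j] ij by auto
  qed
  have vE: "ut_support ?m ?E"
    unfolding ut_support_def
  proof (intro conjI ballI)
    show "?E \<subseteq> {(i, j). 1 \<le> i \<and> i \<le> j \<and> j \<le> ?m}" using s by auto
  next
    fix i assume i: "i \<in> {1..?m}"
    then have "1 \<le> i \<and> i \<le> M" by auto
    then obtain j where j: "(i, j) \<in> E" using rows[of i] by blast
    then show "\<exists>j. (i, j) \<in> ?E" using i by (intro exI[of _ j]) auto
  next
    fix j assume j: "j \<in> {1..?m}"
    then have "1 \<le> j \<and> j \<le> M" by auto
    then obtain i where i: "(i, j) \<in> E" using cols[of j] by blast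
    then show "\<exists>i. (i, j) \<in> ?E" using j by (intro exI[of _ i]) auto
  qed
  have m1: "?m \<ge> 1" using M2 by simp
  have tq: "top_row ?E ?m \<le> ?m" using top_row_props[OF vE m1] by simp
  have k: "matrix_child ?m ?E ?m = (M, E)" using tq M2 diag by (auto simp: matrix_child_def insert_absorb)
  have "Suc (card ?E) = card E" by (rule card_Suc_Diff1[OF fin diag])
  then show ?thesis using vE m1 k by (intro exI[of _ "M - 1"] exI[of _ "E - {(M, M)}"]) auto
qed

lemma merge_col_domain:
  assumes v: "ut_support (Suc m) E" and t: "top_row E (Suc m) = Suc y"
    and row: "\<And>j. (Suc y, j) \<in> E \<Longrightarrow> j = Suc m" and x: "(i, j) \<in> E - {(Suc y, Suc m)}"
  shows "1 \<le> i" "i \<le> j" "j \<le> Suc m" "i \<noteq> Suc y" "j = Suc m \<Longrightarrow> Suc y < i"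
proof -
  show "1 \<le> i" "i \<le> j" "j \<le> Suc m" using ut_support_bounds[OF v] x by auto
  show i: "i \<noteq> Suc y" using row x by auto
  show "j = Suc m \<Longrightarrow> Suc y < i" using top_row_props(4)[OF v, of i] t x i by fastforce
qed

lemma ut_support_merge_col:
  assumes v: "ut_support (Suc m) E" and t: "top_row E (Suc m) = Suc y" "y < m"
    and row: "\<And>j. (Suc y, j) \<in> E \<Longrightarrow> j = Suc m"
  shows "ut_support m (merge_col (Suc y) (Suc m) ` (E - {(Suc y, Suc m)}))"
  unfolding ut_support_def
proof (intro conjI ballI)
  let ?F = "E - {(Suc y, Suc m)}"
  have rows: "\<And>i. 1 \<le> i \<Longrightarrow> i \<le> Suc m \<Longrightarrow> \<exists>j. (i, j) \<in> E"
    and cols: "\<And>j. 1 \<le> j \<Longrightarrow> j \<le> Suc m \<Longrightarrow> \<exists>i. (i, j) \<in> E"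
    using v unfolding ut_support_def by auto
  have above_top: "(i, Suc m) \<notin> E" if "i \<le> y" for i
    using top_row_props(4)[OF v, of i] t that by auto
  have sub: "\<And>i j. (i, j) \<in> E \<Longrightarrow> 1 \<le> i \<and> i \<le> j \<and> j \<le> Suc m" using ut_support_bounds[OF v] by blast
  show "merge_col (Suc y) (Suc m) ` ?F \<subseteq> {(i, j). 1 \<le> i \<and> i \<le> j \<and> j \<le> m}"
  proof
    fix x assume "x \<in> merge_col (Suc y) (Suc m) ` ?F"
    then obtain i j where ij: "(i, j) \<in> ?F" "x = merge_col (Suc y) (Suc m) (i, j)" by auto
    then show "x \<in> {(i, j). 1 \<le> i \<and> i \<le> j \<and> j \<le> m}"
      using merge_col_bounds[OF merge_col_domain[OF v t(1) row ij(1)] t(2)] by (simp add: case_prod_beta)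
  qed
  fix i assume i: "i \<in> {1..m}"
  show "\<exists>j. (i, j) \<in> merge_col (Suc y) (Suc m) ` ?F"
  proof (cases "i \<le> y")
    case True
    obtain j where j: "(i, j) \<in> E" using rows[of i] i by auto
    have "j \<noteq> Suc m" using above_top[OF True] j by auto
    then have "fst (merge_col (Suc y) (Suc m) (i, j)) = i" using True by (auto simp: merge_col_def lower_def)
    moreover have "(i, j) \<in> ?F" using j True by auto
    ultimately show ?thesis by (metis imageI prod.collapse)
  next
    case False
    obtain j where j: "(Suc i, j) \<in> E" using rows[of "Suc i"] i by auto
    have "j \<noteq> Suc y" using sub[of "Suc i" j] j False by auto
    then have "fst (merge_col (Suc y) (Suc m) (Suc i, j)) = i" using False by (auto simp: merge_col_def lower_def)
    moreover have "(Suc i, j) \<in> ?F" using j False by auto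
    ultimately show ?thesis by (metis imageI prod.collapse)
  qed
next
  let ?F = "E - {(Suc y, Suc m)}"
  have cols: "\<And>j. 1 \<le> j \<Longrightarrow> j \<le> Suc m \<Longrightarrow> \<exists>i. (i, j) \<in> E"
    using v unfolding ut_support_def by auto
  fix j assume j: "j \<in> {1..m}"
  have "j \<le> m" using j by simp
  then consider "j = m" | "j \<le> y" | "y < j" "j < m" by linarith
  then show "\<exists>i. (i, j) \<in> merge_col (Suc y) (Suc m) ` ?F"
  proof cases
    case 1
    obtain i where i: "(i, Suc y) \<in> E" using cols[of "Suc y"] t(2) by auto
    have "i \<noteq> Suc y" using i row t(2) by fastforce
    then have "(i, Suc y) \<in> ?F" "snd (merge_col (Suc y) (Suc m) (i, Suc y)) = j"
      using i 1 by (auto simp: merge_col_def)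
    then show ?thesis by (metis imageI prod.collapse)
  next
    case 2
    obtain i where i: "(i, j) \<in> E" using cols[of j] j t(2) by auto
    have "snd (merge_col (Suc y) (Suc m) (i, j)) = j" "(i, j) \<in> ?F"
      using i 2 j t(2) by (auto simp: merge_col_def lower_def)
    then show ?thesis by (metis imageI prod.collapse)
  next
    case 3
    obtain i where i: "(i, Suc j) \<in> E" using cols[of "Suc j"] j 3 by auto
    have "snd (merge_col (Suc y) (Suc m) (i, Suc j)) = j" "(i, Suc j) \<in> ?F"
      using i 3 by (auto simp: merge_col_def lower_def)
    then show ?thesis by (metis imageI prod.collapse)
  qed
qed

lemma matrix_child_preimage_merge:
  assumes v: "ut_support M E" and M2: "M \<ge> 2" and tM: "top_row E M \<noteq> M"
    and row: "\<forall>j. (top_row E M, j) \<in> E \<longrightarrow> j = M"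
  shows "\<exists>m' E' q. ut_support m' E' \<and> Suc (card E') = card E \<and> q \<in> {1..m'} \<and> matrix_child m' E' q = (M, E)"
proof -
  obtain m where M: "M = Suc m" using M2 by (cases M) auto
  have tp: "(top_row E M, M) \<in> E" "1 \<le> top_row E M" "top_row E M \<le> M"
    using top_row_props[OF v] M by auto
  have "top_row E M \<noteq> 1"
  proof
    assume t1: "top_row E M = 1"
    have "1 \<in> {1..M}" using M by simp
    then obtain i where "(i, 1) \<in> E" using v unfolding ut_support_def by blast
    then have "(1, 1) \<in> E" using ut_support_bounds[OF v] by fastforce
    then show False using row t1 tM by auto
  qed
  then obtain y where t: "top_row E (Suc m) = Suc y" "1 \<le> y" "y < m"
    using tp tM M by (cases "top_row E M") auto
  have row': "\<And>j. (Suc y, j) \<in> E \<Longrightarrow> j = Suc m" using row t M by auto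
  have vM: "ut_support (Suc m) E" using v M by simp
  let ?F = "E - {(Suc y, Suc m)}"
  let ?E = "merge_col (Suc y) (Suc m) ` ?F"
  have vE: "ut_support m ?E" by (rule ut_support_merge_col[OF vM t(1,3) row'])
  have fg: "split_col y m (merge_col (Suc y) (Suc m) x) = x" if "x \<in> ?F" for x
  proof -
    obtain i j where x: "x = (i, j)" by (cases x)
    show ?thesis unfolding x
      by (rule split_col_merge_col[OF merge_col_domain[OF vM t(1) row'] t(3)]) (use that x in simp_all)
  qed
  have "inj_on (merge_col (Suc y) (Suc m)) ?F" using fg by (rule inj_on_inverseI)
  then have cardE: "Suc (card ?E) = card E"
    using card_Suc_Diff1[OF finite_ut_support[OF v]] tp(1) t(1) M by (simp add: card_image)
  have "Suc y \<in> {1..M}" using t M by simp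
  then obtain i0 where i0: "(i0, Suc y) \<in> E" using v unfolding ut_support_def by blast
  have "i0 \<noteq> Suc y" using i0 row' t(3) by fastforce
  then have "i0 \<le> y" "(i0, Suc y) \<in> ?F" using ut_support_bounds[OF v i0] i0 by auto
  moreover have "merge_col (Suc y) (Suc m) (i0, Suc y) = (i0, m)" by (simp add: merge_col_def)
  ultimately have "(i0, m) \<in> ?E" by (metis imageI)
  then have "top_row ?E m \<le> y" using top_row_props(4)[OF vE] t \<open>i0 \<le> y\<close> by fastforce
  moreover have "split_col y m ` ?E = ?F" using fg by (simp add: image_image)
  ultimately have "matrix_child m ?E y = (M, insert (Suc y, Suc m) ?F)"
    using t M unfolding matrix_child_def by auto
  also have "\<dots> = (M, E)" using tp(1) t(1) M by auto
  finally show ?thesis using vE cardE t by (intro exI[of _ m] exI[of _ ?E] exI[of _ y]) auto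
qed

lemma matrix_child_preimage_top:
  assumes v: "ut_support M E" and M2: "M \<ge> 2" and tM: "top_row E M \<noteq> M"
    and row: "\<not> (\<forall>j. (top_row E M, j) \<in> E \<longrightarrow> j = M)"
  shows "\<exists>m' E' q. ut_support m' E' \<and> Suc (card E') = card E \<and> q \<in> {1..m'} \<and> matrix_child m' E' q = (M, E)"
proof -
  have M1: "M \<ge> 1" using M2 by simp
  let ?t = "top_row E M"
  have tp: "(?t, M) \<in> E" "1 \<le> ?t" "?t \<le> M" "\<And>i. (i, M) \<in> E \<Longrightarrow> ?t \<le> i"
    using top_row_props[OF v M1] by auto
  have sub: "\<And>i j. (i, j) \<in> E \<Longrightarrow> 1 \<le> i \<and> i \<le> j \<and> j \<le> M" using ut_support_bounds[OF v] by blast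
  have rows: "\<And>i. 1 \<le> i \<Longrightarrow> i \<le> M \<Longrightarrow> \<exists>j. (i, j) \<in> E" using v unfolding ut_support_def by auto
  have cols: "\<And>j. 1 \<le> j \<Longrightarrow> j \<le> M \<Longrightarrow> \<exists>i. (i, j) \<in> E" using v unfolding ut_support_def by auto
  have fin: "finite E" using finite_ut_support[OF v] .
  have diag: "(M, M) \<in> E" using ut_support_last_diag[OF v M1] .
  obtain j1 where j1: "(?t, j1) \<in> E" "j1 \<noteq> M" using row by blast
  let ?E = "E - {(?t, M)}"
  have vE: "ut_support M ?E"
    unfolding ut_support_def
  proof (intro conjI ballI)
    show "?E \<subseteq> {(i, j). 1 \<le> i \<and> i \<le> j \<and> j \<le> M}" using sub by auto
  next
    fix i assume i: "i \<in> {1..M}"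
    then have "1 \<le> i \<and> i \<le> M" by auto
    then obtain j where j: "(i, j) \<in> E" using rows[of i] by blast
    show "\<exists>j. (i, j) \<in> ?E"
    proof (cases "i = ?t")
      case True then show ?thesis using j1 by (intro exI[of _ j1]) auto
    next
      case False then show ?thesis using j by (intro exI[of _ j]) auto
    qed
  next
    fix j assume j: "j \<in> {1..M}"
    show "\<exists>i. (i, j) \<in> ?E"
    proof (cases "j = M")
      case True then show ?thesis using diag tM by (intro exI[of _ M]) auto
    next
      case False
      then have "1 \<le> j \<and> j \<le> M" using j by auto
      then obtain i where i: "(i, j) \<in> E" using cols[of j] by blast
      then show ?thesis using False by (intro exI[of _ i]) auto
    qed
  qed
  have tq: "?t < top_row ?E M"
  proof -
    have "(top_row ?E M, M) \<in> ?E" using top_row_props(1)[OF vE M1] .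
    then show ?thesis using tp(4) by fastforce
  qed
  have k: "matrix_child M ?E ?t = (M, E)" using tq tp(1) by (auto simp: matrix_child_def insert_absorb)
  have "Suc (card ?E) = card E" by (rule card_Suc_Diff1[OF fin tp(1)])
  then show ?thesis using vE M1 k tp by force
qed

lemma matrix_child_surj:
  assumes v: "ut_support M E" and c: "card E \<ge> 3"
  shows "\<exists>m' E' q. ut_support m' E' \<and> Suc (card E') = card E \<and> q \<in> {1..m'} \<and> matrix_child m' E' q = (M, E)"
proof -
  have M2: "M \<ge> 2" using card_ut_support_le_1[OF v] c by (cases "M \<le> 1") auto
  then show ?thesis
    using matrix_child_preimage_diag[OF v M2] matrix_child_preimage_merge[OF v M2]
      matrix_child_preimage_top[OF v M2] by blast
qed

lemma matrix_child_props:
  assumes v: "ut_support m E" and m: "m \<ge> 1" and q: "q \<in> {1..m}"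
  shows "ut_support (fst (matrix_child m E q)) (snd (matrix_child m E q))" "card (snd (matrix_child m E q)) = Suc (card E)"
    "label_matrix (matrix_child m E q) = (if q \<le> top_row E m - 1 then (m, q - 1) else (Suc m, q))"
proof -
  have tp: "1 \<le> top_row E m" "top_row E m \<le> m" using top_row_props[OF v m] by auto
  consider "q < top_row E m" | "top_row E m \<le> q" "q < m" | "top_row E m \<le> q" "q = m" using q by fastforce
  then have "ut_support (fst (matrix_child m E q)) (snd (matrix_child m E q)) \<and> card (snd (matrix_child m E q)) = Suc (card E) \<and>
    label_matrix (matrix_child m E q) = (if q \<le> top_row E m - 1 then (m, q - 1) else (Suc m, q))"
  proof cases
    case 1
    note ks = ut_support_insert_above_top[OF v m _ 1]
    have k: "matrix_child m E q = (m, insert (q, m) E)" using 1 by (simp add: matrix_child_def)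
    show ?thesis unfolding k label_matrix_def using ks q 1 by auto
  next
    case 2
    note ks = ut_support_split_col[OF v m 2] split_col_image[OF v 2]
    have k: "matrix_child m E q = (Suc m, insert (Suc q, Suc m) (split_col q m ` E))" using 2 by (simp add: matrix_child_def)
    show ?thesis unfolding k label_matrix_def using ks q 2 tp by auto
  next
    case 3
    note ks = ut_support_insert_diag[OF v m]
    have k: "matrix_child m E q = (Suc m, insert (Suc m, Suc m) E)" using 3 by (simp add: matrix_child_def)
    show ?thesis unfolding k label_matrix_def using ks q 3 tp by auto
  qed
  then show "ut_support (fst (matrix_child m E q)) (snd (matrix_child m E q))" "card (snd (matrix_child m E q)) = Suc (card E)"
    "label_matrix (matrix_child m E q) = (if q \<le> top_row E m - 1 then (m, q - 1) else (Suc m, q))" by auto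
qed

lemma ut_support_size_le_card: assumes v: "ut_support m E" shows "m \<le> card E"
proof -
  define f where "f i = (i, SOME j. (i, j) \<in> E)" for i
  have "\<And>i. i \<in> {1..m} \<Longrightarrow> f i \<in> E"
  proof -
    fix i assume "i \<in> {1..m}"
    then have "\<exists>j. (i, j) \<in> E" using v unfolding ut_support_def by blast
    then show "f i \<in> E" unfolding f_def by (rule someI_ex)
  qed
  moreover have "inj_on f {1..m}" unfolding f_def by (rule inj_onI) simp
  ultimately have "card {1..m} \<le> card E" using finite_ut_support[OF v] by (intro card_inj_on_le) auto
  then show ?thesis by simp
qed

lemma ut_support_size_pos: "ut_support m E \<Longrightarrow> card E \<ge> 1 \<Longrightarrow> m \<ge> 1"
proof (rule ccontr)
  assume v: "ut_support m E" and c: "card E \<ge> 1" and "\<not> m \<ge> 1"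
  then have "m = 0" by simp
  then have "E = {}" using ut_support_bounds[OF v] by fastforce
  then show False using c by simp
qed

definition level_matrix :: "nat \<Rightarrow> (nat \<times> (nat \<times> nat) set) set" where
  "level_matrix n = {(m, E). ut_support m E \<and> card E = Suc n}"

definition children_matrix :: "nat \<times> (nat \<times> nat) set \<Rightarrow> (nat \<times> (nat \<times> nat) set) set" where
  "children_matrix x = (case x of (m, E) \<Rightarrow> matrix_child m E ` {1..m})"

lemma level_matrix_1: "level_matrix 1 = {(2, {(1,1),(2,2)})}"
proof (rule set_eqI)
  fix x :: "nat \<times> (nat \<times> nat) set"
  obtain m E where x: "x = (m, E)" by (cases x)
  show "x \<in> level_matrix 1 \<longleftrightarrow> x \<in> {(2, {(1,1),(2,2)})}"
  proof
    assume "x \<in> level_matrix 1"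
    then have v: "ut_support m E" and c: "card E = 2" unfolding level_matrix_def x by auto
    have m2: "m \<le> 2" using ut_support_size_le_card[OF v] c by simp
    have m1: "m \<ge> 1" using ut_support_size_pos[OF v] c by simp
    have "m \<noteq> 1"
    proof
      assume "m = 1"
      then have "card E \<le> 1" using card_ut_support_le_1[OF v] by simp
      then show False using c by simp
    qed
    then have mm: "m = 2" using m1 m2 by simp
    have d: "(2, 2) \<in> E" using ut_support_last_diag[OF v] mm by simp
    have "1 \<in> {1..m}" using mm by simp
    then obtain i where "(i, 1) \<in> E" using v unfolding ut_support_def by blast
    then have d1: "(1, 1) \<in> E" using ut_support_bounds[OF v] by (metis le_antisym)
    have sub: "{(1,1),(2,2)} \<subseteq> E" using d d1 by auto
    have "{(1::nat,1::nat),(2,2)} = E"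
      by (rule card_subset_eq[OF finite_ut_support[OF v] sub]) (simp add: c)
    then show "x \<in> {(2, {(1,1),(2,2)})}" using x mm by simp
  next
    assume "x \<in> {(2, {(1,1),(2,2)})}"
    then have "m = 2" "E = {(1,1),(2,2)}" using x by auto
    moreover have "ut_support 2 {(1,1),(2,2)}"
    proof -
      have "{1..2::nat} = {1,2}" by auto
      then show ?thesis unfolding ut_support_def by auto
    qed
    ultimately show "x \<in> level_matrix 1" unfolding level_matrix_def x by simp
  qed
qed

lemma level_matrix_Suc:
  assumes "n \<ge> 1"
  shows "level_matrix (Suc n) = (\<Union>x\<in>level_matrix n. children_matrix x)"
proof (rule set_eqI, rule iffI)
  fix y assume "y \<in> level_matrix (Suc n)"
  then obtain M E where y: "y = (M, E)" "ut_support M E" "card E = Suc (Suc n)"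
    unfolding level_matrix_def by auto
  then obtain m E' q where p: "ut_support m E'" "Suc (card E') = card E" "q \<in> {1..m}"
    "matrix_child m E' q = (M, E)"
    using matrix_child_surj[OF y(2)] assms by auto
  then have "(m, E') \<in> level_matrix n" "y \<in> children_matrix (m, E')"
    unfolding level_matrix_def children_matrix_def using y by (auto intro: rev_image_eqI)
  then show "y \<in> (\<Union>x\<in>level_matrix n. children_matrix x)" by blast
next
  fix y assume "y \<in> (\<Union>x\<in>level_matrix n. children_matrix x)"
  then obtain m E q where h: "ut_support m E" "card E = Suc n" "q \<in> {1..m}" "y = matrix_child m E q"
    unfolding level_matrix_def children_matrix_def by auto
  then have "m \<ge> 1" by simp
  then show "y \<in> level_matrix (Suc n)"
    unfolding level_matrix_def using matrix_child_props[OF h(1) _ h(3)] h(2,4) by (cases y) auto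
qed

lemma parent_children_matrix:
  "x \<in> level_matrix n \<Longrightarrow> c \<in> children_matrix x \<Longrightarrow> matrix_parent c = x"
  unfolding level_matrix_def children_matrix_def using matrix_parent_child by auto

lemma finite_children_matrix: "finite (children_matrix x)"
  unfolding children_matrix_def by (simp split: prod.split)

lemma sum_children_matrix:
  assumes x: "x \<in> level_matrix n"
  shows "(\<Sum>c\<in>children_matrix x. tree_count k (label_matrix c)) = tree_count (Suc k) (label_matrix x)"
proof -
  obtain m E where x: "x = (m, E)" "ut_support m E" "card E = Suc n" using x unfolding level_matrix_def by auto
  have m1: "m \<ge> 1" using ut_support_size_pos[OF x(2)] x(3) by simp
  have tp: "top_row E m \<le> m" "1 \<le> top_row E m" using top_row_props[OF x(2) m1] by auto
  have label: "label_matrix (matrix_child m E q) =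
      (if id q \<le> top_row E m - 1 then (m, id q - 1) else (Suc m, id q))" if "q \<in> {1..m}" for q
    using matrix_child_props(3)[OF x(2) m1 that] by simp
  have inj: "inj_on (matrix_child m E) {1..m}"
  proof (rule inj_onI)
    fix a b assume ab: "a \<in> {1..m}" "b \<in> {1..m}" "matrix_child m E a = matrix_child m E b"
    then have "label_matrix (matrix_child m E a) = label_matrix (matrix_child m E b)" by simp
    then show "a = b" using label[OF ab(1)] label[OF ab(2)] ab(1,2) by (auto split: if_splits)
  qed
  have "(\<Sum>c\<in>matrix_child m E ` {1..m}. tree_count k (label_matrix c)) = tree_count (Suc k) (m, top_row E m - 1)"
    by (rule sum_tree_count_ranked_children[where r = id]) (use inj label tp in auto)
  then show ?thesis unfolding children_matrix_def x label_matrix_def by simp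
qed

lemma card_level_matrix: "card (level_matrix (Suc j)) = tree_count j (2, 1)"
proof -
  have "top_row {(1,1),(2,2)} 2 = 2" by (rule top_row_eqI) auto
  then have label_root: "label_matrix (2, {(1,1),(2,2)}) = (2, 1)" unfolding label_matrix_def by simp
  show ?thesis
    by (rule card_level_generating_tree[where level = level_matrix and children = children_matrix
          and parent = matrix_parent and label = label_matrix, OF _ _ _ _ level_matrix_1 label_root])
      (simp_all add: level_matrix_Suc parent_children_matrix sum_children_matrix finite_children_matrix)
qed

lemma ut_support_ones:
  assumes A: "upper_tri_bin m A" and z: "no_zero_lines m A"
  shows "ut_support m (ones A)"
proof -
  have "1 \<le> i \<and> i \<le> j \<and> j \<le> m" if "A i j = 1" for i j
  proof -
    have "A i j \<noteq> 0" using that by simp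
    then show ?thesis using A unfolding upper_tri_bin_def by (meson not_le)
  qed
  moreover have "\<forall>i\<in>{1..m}. \<exists>j. A i j = 1" "\<forall>j\<in>{1..m}. \<exists>i. A i j = 1"
    using z unfolding no_zero_lines_def by blast+
  ultimately show ?thesis unfolding ut_support_def ones_def by auto
qed

lemma ones_inj:
  assumes "upper_tri_bin m A" "upper_tri_bin m' B" "ones A = ones B"
  shows "A = B"
proof (intro ext)
  fix i j
  have "A i j \<in> {0, 1}" "B i j \<in> {0, 1}" using assms(1,2) unfolding upper_tri_bin_def by auto
  moreover have "A i j = 1 \<longleftrightarrow> B i j = 1"
    using assms(3) unfolding ones_def by (auto simp: set_eq_iff)
  ultimately show "A i j = B i j" by auto
qed

lemma ut_support_indicator:
  assumes "ut_support m E"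
  defines "A \<equiv> \<lambda>i j. if (i, j) \<in> E then 1 else 0 :: nat"
  shows "upper_tri_bin m A" "no_zero_lines m A" "ones A = E"
proof -
  have bounds: "\<And>i j. (i, j) \<in> E \<Longrightarrow> 1 \<le> i \<and> i \<le> j \<and> j \<le> m" using ut_support_bounds[OF assms(1)] by blast
  show "upper_tri_bin m A" unfolding upper_tri_bin_def A_def by (auto dest: bounds)
  show "no_zero_lines m A"
    unfolding no_zero_lines_def A_def
  proof (intro conjI ballI)
    fix i assume "i \<in> {1..m}"
    then obtain j where "(i, j) \<in> E" using assms(1) unfolding ut_support_def by blast
    then show "\<exists>j\<in>{1..m}. (if (i, j) \<in> E then 1 else 0) = 1" using bounds by force
  next
    fix j assume "j \<in> {1..m}"
    then obtain i where "(i, j) \<in> E" using assms(1) unfolding ut_support_def by blast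
    then show "\<exists>i\<in>{1..m}. (if (i, j) \<in> E then 1 else 0) = 1" using bounds by force
  qed
  show "ones A = E" unfolding ones_def A_def by auto
qed

lemma card_upper_tri_bin_eq_level_matrix:
  "card {(m, A). upper_tri_bin m A \<and> card (ones A) = n + 1 \<and> no_zero_lines m A} = card (level_matrix n)"
proof -
  let ?X = "{(m, A). upper_tri_bin m A \<and> card (ones A) = n + 1 \<and> no_zero_lines m A}"
  let ?f = "\<lambda>(m, A). (m, ones A)"
  have "inj_on ?f ?X" by (rule inj_onI) (auto dest: ones_inj)
  moreover have "?f ` ?X = level_matrix n"
  proof (rule set_eqI, rule iffI)
    fix z assume "z \<in> ?f ` ?X"
    then show "z \<in> level_matrix n" unfolding level_matrix_def by (auto intro: ut_support_ones)
  next
    fix z assume "z \<in> level_matrix n"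
    then obtain m E where z: "z = (m, E)" "ut_support m E" "card E = Suc n" unfolding level_matrix_def by auto
    note ut_support_indicator[OF z(2)]
    then show "z \<in> ?f ` ?X" using z by (intro image_eqI[of _ _ "(m, \<lambda>i j. if (i, j) \<in> E then 1 else 0)"]) auto
  qed
  ultimately show ?thesis using card_image by fastforce
qed

theorem mainTheorem7:
  fixes n :: nat
  assumes "n \<ge> 1"
  shows "card {\<pi>. \<pi> permutes {1..n} \<and> avoids_bv n \<pi> [3,2,1] {1} {1}}
           = card {(m, A). upper_tri_bin m A \<and> card (ones A) = n + 1 \<and> no_zero_lines m A}
       \<and> card {\<pi>. \<pi> permutes {1..n} \<and> avoids_bv n \<pi> [3,2,1] {1} {1}}
           = card {\<pi>. \<pi> permutes {1..n+1} \<and> avoids_bv (n+1) \<pi> [2,3,1] {1} {1}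
                      \<and> avoids_bv (n+1) \<pi> [2,1] {1} {1}}"
proof -
  obtain j where n: "n = Suc j" using assms by (cases n) auto
  have "card {\<pi>. \<pi> permutes {1..n} \<and> avoids_bv n \<pi> [3,2,1] {1} {1}} = tree_count j (2, 1)"
    unfolding n avoids_bv_321_iff by (rule card_avoids_321)
  moreover have "card {(m, A). upper_tri_bin m A \<and> card (ones A) = n + 1 \<and> no_zero_lines m A} = tree_count j (2, 1)"
    unfolding card_upper_tri_bin_eq_level_matrix n by (rule card_level_matrix)
  moreover have "card {\<pi>. \<pi> permutes {1..n+1} \<and> avoids_bv (n+1) \<pi> [2,3,1] {1} {1}
      \<and> avoids_bv (n+1) \<pi> [2,1] {1} {1}} = tree_count j (2, 1)"
    unfolding n avoids_bv_231_iff avoids_bv_21_iff Suc_eq_plus1[symmetric] by (rule card_avoids_231_21)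
  ultimately show ?thesis by simp
qed

end
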